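(* Let $G=(\mathscr{V},\mathscr{E},m,\theta)$ be a weighted graph, $V:\mathscr{V}\to\mathbb{R}$ arbitrary, and $\gamma>0$. Suppose that for every sequence $(x_n)_{n\in\mathbb{N}}\in\mathscr{V}^{\mathbb{N}}$ with $\mathscr{E}(x_n,x_{n+1})>0$ for all $n$, one has \[ \sum_{n\in\mathbb{N}}m^2(x_n)\prod_{i=0}^{n-1}\frac{\gamma}{d_G(x_i)}=\infty. \] Then the operator $H:=\Delta_{\mathscr{E},\theta}+V(Q)$ is essentially self-adjoint on $\mathcal{C}_c(\mathscr{V})$.
   Context: A weighted graph $G=(\mathscr{V},\mathscr{E},m,\theta)$: $\mathscr{V}$ countable, $\mathscr{E}:\mathscr{V}\times\mathscr{V}\to[0,\infty)$ symmetric, $m:\mathscr{V}\to(0,\infty)$, $\theta:\mathscr{V}\times\mathscr{V}\to[-\pi,\pi]$ antisymmetric; assumed locally finite, connected, without loops. Work in $\ell^2(\mathscr{V},m^2)$ with inner product $\sum_x m^2(x)\overline{f(x)}g(x)$; $\mathcal{C}_c(\mathscr{V})$ = finitely supported functions. $d_G(x)=m^{-2}(x)\sum_y\mathscr{E}(x,y)$. On $\mathcal{C}_c(\mathscr{V})$, $(Hf)(x)=m^{-2}(x)\sum_y\mathscr{E}(x,y)(f(x)-e^{i\theta(x,y)}f(y))+V(x)f(x)$. *)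

theory Defs
  imports "HOL-Analysis.Analysis"
begin

text \<open>Weighted graph data: E (edge weights), m (vertex weights), theta (magnetic phase).
  Functions on the vertex type 'v are complex valued; the Hilbert space is l^2(V, m^2).\<close>

definition in_l2 :: "('v \<Rightarrow> real) \<Rightarrow> ('v \<Rightarrow> complex) \<Rightarrow> bool" where
  "in_l2 m f \<longleftrightarrow> (\<lambda>x. (m x)\<^sup>2 * (cmod (f x))\<^sup>2) summable_on UNIV"

definition l2_inner :: "('v \<Rightarrow> real) \<Rightarrow> ('v \<Rightarrow> complex) \<Rightarrow> ('v \<Rightarrow> complex) \<Rightarrow> complex" where
  "l2_inner m f g = (\<Sum>\<^sub>\<infinity>x. complex_of_real ((m x)\<^sup>2) * cnj (f x) * g x)"

definition l2_norm :: "('v \<Rightarrow> real) \<Rightarrow> ('v \<Rightarrow> complex) \<Rightarrow> real" where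
  "l2_norm m f = sqrt (\<Sum>\<^sub>\<infinity>x. (m x)\<^sup>2 * (cmod (f x))\<^sup>2)"

definition Cc :: "('v \<Rightarrow> complex) set" where
  "Cc = {f. finite {x. f x \<noteq> 0}}"

definition weighted_degree :: "('v \<Rightarrow> 'v \<Rightarrow> real) \<Rightarrow> ('v \<Rightarrow> real) \<Rightarrow> 'v \<Rightarrow> real" where
  "weighted_degree E m x = (\<Sum>y\<in>{y. E x y \<noteq> 0}. E x y) / (m x)\<^sup>2"

definition Hop :: "('v \<Rightarrow> 'v \<Rightarrow> real) \<Rightarrow> ('v \<Rightarrow> real) \<Rightarrow> ('v \<Rightarrow> 'v \<Rightarrow> real) \<Rightarrow> ('v \<Rightarrow> real)
    \<Rightarrow> ('v \<Rightarrow> complex) \<Rightarrow> ('v \<Rightarrow> complex)" where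
  "Hop E m \<theta> V f = (\<lambda>x. complex_of_real (1 / (m x)\<^sup>2) *
      (\<Sum>y\<in>{y. E x y \<noteq> 0}. complex_of_real (E x y) *
          (f x - exp (\<i> * complex_of_real (\<theta> x y)) * f y))
      + complex_of_real (V x) * f x)"

definition graph_H_Cc where
  "graph_H_Cc E m \<theta> V = {(f, Hop E m \<theta> V f) | f. f \<in> Cc}"

text \<open>Operators are handled through their graphs (sets of pairs) in l^2(V,m^2).\<close>
definition l2_closure :: "('v \<Rightarrow> real) \<Rightarrow> (('v \<Rightarrow> complex) \<times> ('v \<Rightarrow> complex)) set
    \<Rightarrow> (('v \<Rightarrow> complex) \<times> ('v \<Rightarrow> complex)) set" where
  "l2_closure m A = {(f, g). in_l2 m f \<and> in_l2 m g \<and>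
      (\<exists>s. (\<forall>n. s n \<in> A) \<and> (\<lambda>n. l2_norm m (fst (s n) - f)) \<longlonglongrightarrow> 0
                        \<and> (\<lambda>n. l2_norm m (snd (s n) - g)) \<longlonglongrightarrow> 0)}"

definition l2_adjoint :: "('v \<Rightarrow> real) \<Rightarrow> (('v \<Rightarrow> complex) \<times> ('v \<Rightarrow> complex)) set
    \<Rightarrow> (('v \<Rightarrow> complex) \<times> ('v \<Rightarrow> complex)) set" where
  "l2_adjoint m A = {(u, w). in_l2 m u \<and> in_l2 m w \<and>
      (\<forall>(f, g)\<in>A. l2_inner m u g = l2_inner m w f)}"

definition densely_defined_operator :: "('v \<Rightarrow> real) \<Rightarrow> (('v \<Rightarrow> complex) \<times> ('v \<Rightarrow> complex)) set \<Rightarrow> bool" where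
  "densely_defined_operator m A \<longleftrightarrow>
     (\<forall>(f, g)\<in>A. in_l2 m f \<and> in_l2 m g) \<and>
     (\<forall>f g h. (f, g) \<in> A \<longrightarrow> (f, h) \<in> A \<longrightarrow> g = h) \<and>
     (\<forall>u. in_l2 m u \<longrightarrow> (\<forall>e>0. \<exists>(f, g)\<in>A. l2_norm m (f - u) < e))"

definition self_adjoint_l2 :: "('v \<Rightarrow> real) \<Rightarrow> (('v \<Rightarrow> complex) \<times> ('v \<Rightarrow> complex)) set \<Rightarrow> bool" where
  "self_adjoint_l2 m A \<longleftrightarrow> densely_defined_operator m A \<and> l2_adjoint m A = A"

definition essentially_self_adjoint_l2 :: "('v \<Rightarrow> real) \<Rightarrow> (('v \<Rightarrow> complex) \<times> ('v \<Rightarrow> complex)) set \<Rightarrow> bool" where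
  "essentially_self_adjoint_l2 m A \<longleftrightarrow>
     densely_defined_operator m A \<and> self_adjoint_l2 m (l2_closure m A)"

end

theory Submission
  imports Defs
begin

text \<open>
  Essential self-adjointness follows from von Neumann's criterion: H is symmetric on finitely
  supported functions, and for \<kappa> \<noteq> 0 the equation (H - i\<kappa>) f = h can be solved in the closure
  of the graph of H, because \<parallel>(H - i\<kappa>) f\<parallel>^2 = \<parallel>H f\<parallel>^2 + \<kappa>^2 \<parallel>f\<parallel>^2 turns approximate solutions into
  Cauchy sequences, and the defect of the best approximation is an l2 eigenfunction of H with
  eigenvalue -i\<kappa>. So it suffices to exclude l2 solutions of H u = \<plusminus>2i\<gamma> u.

  If u x \<noteq> 0, the eigenvalue equation at x forces a neighbour y with
  \<bar>u y\<bar> \<ge> (2\<gamma> / d x) \<bar>u x\<bar>; iterating yields a walk along which \<bar>u\<bar> grows at least like 2^n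
  times the product of the factors \<gamma> / d. Applied to the back-and-forth walk on an edge, the
  hypothesis gives d x * d y \<le> \<gamma>^2, so these products stay bounded below and \<bar>u\<bar> at least
  quadruples every two steps. The walk therefore visits each vertex at most twice, the l2 mass
  of u along it is finite, and it dominates the walk sum that the hypothesis declares divergent.
\<close>

section \<open>The weighted space of square summable functions\<close>

definition l2_sqnorm :: "('v \<Rightarrow> real) \<Rightarrow> ('v \<Rightarrow> complex) \<Rightarrow> real" where
  "l2_sqnorm m f = (\<Sum>\<^sub>\<infinity>x. (m x)\<^sup>2 * (cmod (f x))\<^sup>2)"

definition l2_Cauchy :: "('v \<Rightarrow> real) \<Rightarrow> (nat \<Rightarrow> 'v \<Rightarrow> complex) \<Rightarrow> bool" where
  "l2_Cauchy m s \<longleftrightarrow> (\<forall>e>0. \<exists>N. \<forall>n\<ge>N. \<forall>k\<ge>N. l2_norm m (s n - s k) < e)"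

abbreviation l2_tendsto :: "('v \<Rightarrow> real) \<Rightarrow> (nat \<Rightarrow> 'v \<Rightarrow> complex) \<Rightarrow> ('v \<Rightarrow> complex) \<Rightarrow> bool" where
  "l2_tendsto m s f \<equiv> (\<lambda>n. l2_norm m (s n - f)) \<longlonglongrightarrow> 0"

lemma l2_norm_eq_sqrt: "l2_norm m f = sqrt (l2_sqnorm m f)"
  by (simp add: l2_norm_def l2_sqnorm_def)

lemma l2_sqnorm_nonneg: "l2_sqnorm m f \<ge> 0"
  unfolding l2_sqnorm_def by (rule infsum_nonneg) auto

lemma l2_norm_nonneg: "l2_norm m f \<ge> 0"
  by (simp add: l2_norm_eq_sqrt l2_sqnorm_nonneg)

lemma l2_norm_power2: "(l2_norm m f)\<^sup>2 = l2_sqnorm m f"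
  by (simp add: l2_norm_eq_sqrt l2_sqnorm_nonneg)

lemma l2_norm_less_iff_sqnorm_less:
  assumes "e > 0" shows "l2_norm m f < e \<longleftrightarrow> l2_sqnorm m f < e\<^sup>2"
proof -
  have "e = sqrt (e\<^sup>2)" using assms by simp
  then show ?thesis unfolding l2_norm_eq_sqrt by (metis real_sqrt_less_iff)
qed

lemma l2_norm_commute: "l2_norm m (a - b) = l2_norm m (b - a)"
  unfolding l2_norm_eq_sqrt l2_sqnorm_def by (simp add: norm_minus_commute)

lemma infsum_diff:
  fixes f g :: "'a \<Rightarrow> 'b::{topological_ab_group_add, t2_space}"
  assumes "f summable_on A" "g summable_on A"
  shows "(\<Sum>\<^sub>\<infinity>x\<in>A. f x - g x) = infsum f A - infsum g A"
proof -
  have "(\<Sum>\<^sub>\<infinity>x\<in>A. f x + (- g x)) = infsum f A + (\<Sum>\<^sub>\<infinity>x\<in>A. - g x)"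
    by (rule infsum_add) (use assms in \<open>auto simp: summable_on_uminus\<close>)
  then show ?thesis by (simp add: infsum_uminus)
qed

lemma in_l2_pointwise_bound:
  assumes "in_l2 m f" "in_l2 m g" "\<And>x. cmod (h x) \<le> cmod (f x) + cmod (g x)"
  shows "in_l2 m h"
proof -
  have s: "(\<lambda>x. 2 * ((m x)\<^sup>2 * (cmod (f x))\<^sup>2) + 2 * ((m x)\<^sup>2 * (cmod (g x))\<^sup>2)) summable_on UNIV"
    using assms by (intro summable_on_add summable_on_cmult_right) (auto simp: in_l2_def)
  show ?thesis unfolding in_l2_def
  proof (rule summable_on_comparison_test[OF s])
    fix x
    have "(cmod (h x))\<^sup>2 \<le> (cmod (f x) + cmod (g x))\<^sup>2"
      using assms(3)[of x] by (intro power_mono) auto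
    also have "\<dots> \<le> 2 * (cmod (f x))\<^sup>2 + 2 * (cmod (g x))\<^sup>2"
      using zero_le_power2[of "cmod (f x) - cmod (g x)"] by (simp add: power2_eq_square algebra_simps)
    finally show "(m x)\<^sup>2 * (cmod (h x))\<^sup>2 \<le> 2 * ((m x)\<^sup>2 * (cmod (f x))\<^sup>2) + 2 * ((m x)\<^sup>2 * (cmod (g x))\<^sup>2)"
      by (metis distrib_left mult.left_commute mult_left_mono zero_le_power2)
  qed simp
qed

lemma in_l2_diff: "in_l2 m f \<Longrightarrow> in_l2 m g \<Longrightarrow> in_l2 m (f - g)"
  by (rule in_l2_pointwise_bound[of m f g]) (auto simp: norm_triangle_ineq4)

lemma in_l2_cmult: "in_l2 m f \<Longrightarrow> in_l2 m (\<lambda>x. c * f x)"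
  unfolding in_l2_def
  by (rule summable_on_comparison_test[OF summable_on_cmult_right[of _ _ "(cmod c)\<^sup>2"]])
    (auto simp: norm_mult power_mult_distrib)

lemma Cc_in_l2: "f \<in> Cc \<Longrightarrow> in_l2 m f"
  unfolding in_l2_def Cc_def
  by (rule summable_on_cong_neutral[THEN iffD1, of _ "{x. f x \<noteq> 0}", rotated -1]) auto

lemma l2_inner_summable:
  assumes "in_l2 m f" "in_l2 m g"
  shows "(\<lambda>x. complex_of_real ((m x)\<^sup>2) * cnj (f x) * g x) summable_on UNIV"
proof -
  have s: "(\<lambda>x. (m x)\<^sup>2 * (cmod (f x))\<^sup>2 + (m x)\<^sup>2 * (cmod (g x))\<^sup>2) summable_on UNIV"
    using assms by (intro summable_on_add) (auto simp: in_l2_def)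
  have "(\<lambda>x. norm (complex_of_real ((m x)\<^sup>2) * cnj (f x) * g x)) summable_on UNIV"
  proof (rule summable_on_comparison_test[OF s])
    fix x
    have "cmod (f x) * cmod (g x) \<le> (cmod (f x))\<^sup>2 + (cmod (g x))\<^sup>2"
      using zero_le_power2[of "cmod (f x) - cmod (g x)"]
      by (simp add: power2_eq_square algebra_simps) (smt (verit) mult_nonneg_nonneg norm_ge_zero)
    then have "(m x)\<^sup>2 * (cmod (f x) * cmod (g x)) \<le> (m x)\<^sup>2 * ((cmod (f x))\<^sup>2 + (cmod (g x))\<^sup>2)"
      by (rule mult_left_mono) simp
    then show "norm (complex_of_real ((m x)\<^sup>2) * cnj (f x) * g x)
        \<le> (m x)\<^sup>2 * (cmod (f x))\<^sup>2 + (m x)\<^sup>2 * (cmod (g x))\<^sup>2"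
      by (simp add: norm_mult norm_power algebra_simps)
  qed simp
  then show ?thesis
    using summable_on_iff_abs_summable_on_complex by blast
qed

lemma l2_inner_commute: "l2_inner m g f = cnj (l2_inner m f g)"
  unfolding l2_inner_def infsum_cnj[symmetric]
  by (simp add: mult.commute mult.left_commute)

lemma l2_inner_diff_left:
  assumes "in_l2 m a" "in_l2 m b" "in_l2 m c"
  shows "l2_inner m (a - b) c = l2_inner m a c - l2_inner m b c"
  using infsum_diff[OF l2_inner_summable[OF assms(1,3)] l2_inner_summable[OF assms(2,3)]]
  unfolding l2_inner_def by (simp add: algebra_simps)

lemma l2_inner_diff_right:
  assumes "in_l2 m a" "in_l2 m b" "in_l2 m c"
  shows "l2_inner m c (a - b) = l2_inner m c a - l2_inner m c b"
  using infsum_diff[OF l2_inner_summable[OF assms(3,1)] l2_inner_summable[OF assms(3,2)]]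
  unfolding l2_inner_def by (simp add: algebra_simps)

lemma l2_inner_cmult_right: "l2_inner m a (\<lambda>x. t * c x) = t * l2_inner m a c"
  unfolding l2_inner_def
  by (subst infsum_cmult_right'[symmetric]) (auto intro!: infsum_cong simp: algebra_simps)

lemma l2_inner_cmult_left: "l2_inner m (\<lambda>x. t * a x) c = cnj t * l2_inner m a c"
  unfolding l2_inner_def
  by (subst infsum_cmult_right'[symmetric]) (auto intro!: infsum_cong simp: algebra_simps)

lemma l2_sqnorm_diff:
  assumes a: "in_l2 m a" and b: "in_l2 m b"
  shows "l2_sqnorm m (a - b) = l2_sqnorm m a + l2_sqnorm m b - 2 * Re (l2_inner m a b)"
proof -
  let ?N = "\<lambda>f x. (m x)\<^sup>2 * (cmod (f x))\<^sup>2"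
  let ?R = "\<lambda>x. 2 * Re (complex_of_real ((m x)\<^sup>2) * cnj (a x) * b x)"
  have R: "?R summable_on UNIV"
    by (rule summable_on_cmult_right) (use summable_on_Re[OF l2_inner_summable[OF a b]] in simp)
  have "l2_sqnorm m (a - b) = (\<Sum>\<^sub>\<infinity>x. (?N a x + ?N b x) - ?R x)"
    unfolding l2_sqnorm_def cmod_power2 by (rule infsum_cong) (simp add: power2_eq_square algebra_simps)
  also have "\<dots> = l2_sqnorm m a + l2_sqnorm m b - infsum ?R UNIV"
    using a b R unfolding l2_sqnorm_def in_l2_def by (simp add: infsum_diff infsum_add summable_on_add)
  also have "infsum ?R UNIV = 2 * Re (l2_inner m a b)"
    unfolding l2_inner_def infsum_cmult_right' infsum_Re[OF l2_inner_summable[OF a b]] ..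
  finally show ?thesis .
qed

lemma l2_sqnorm_cmult: "l2_sqnorm m (\<lambda>x. c * a x) = (cmod c)\<^sup>2 * l2_sqnorm m a"
  unfolding l2_sqnorm_def
  by (subst infsum_cmult_right'[symmetric]) (simp add: norm_mult power_mult_distrib algebra_simps)

lemma l2_norm_cmult: "l2_norm m (\<lambda>x. c * a x) = cmod c * l2_norm m a"
  by (simp add: l2_norm_eq_sqrt l2_sqnorm_cmult real_sqrt_mult)

lemma l2_sqnorm_add:
  assumes "in_l2 m a" "in_l2 m b"
  shows "l2_sqnorm m (\<lambda>x. a x + b x) = l2_sqnorm m a + l2_sqnorm m b + 2 * Re (l2_inner m a b)"
  using l2_sqnorm_diff[OF assms(1) in_l2_cmult[OF assms(2), of "-1"]]
  using l2_sqnorm_cmult[of m "-1" b] l2_inner_cmult_right[of m a "-1" b] by (simp add: fun_diff_def)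

lemma norm_le_l2_norm:
  assumes "in_l2 m f" "m x > 0"
  shows "cmod (f x) \<le> l2_norm m f / m x"
proof -
  have "(\<Sum>x\<in>{x}. (m x)\<^sup>2 * (cmod (f x))\<^sup>2) \<le> l2_sqnorm m f"
    unfolding l2_sqnorm_def by (rule finite_sum_le_infsum) (use assms in \<open>auto simp: in_l2_def\<close>)
  then have "m x * cmod (f x) \<le> l2_norm m f"
    by (simp add: l2_norm_eq_sqrt real_le_rsqrt power_mult_distrib)
  then show ?thesis using assms(2) by (simp add: field_simps)
qed

lemma le_sqrt_mult_sqrt_if_le_weighted_means:
  fixes c F G :: real
  assumes "c \<ge> 0" "F \<ge> 0" "G \<ge> 0" and bound: "\<And>a. a > 0 \<Longrightarrow> c \<le> (a * F + G / a) / 2"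
  shows "c \<le> sqrt F * sqrt G"
proof (cases "F > 0 \<and> G > 0")
  case True
  then have "sqrt G / sqrt F * F = sqrt F * sqrt G" "G / (sqrt G / sqrt F) = sqrt F * sqrt G"
    by (simp_all add: field_simps real_div_sqrt)
  then show ?thesis using bound[of "sqrt G / sqrt F"] True by simp
next
  case False
  show ?thesis
  proof (rule ccontr)
    assume "\<not> ?thesis"
    then have c: "c > 0" using assms False by auto
    show False
    proof (cases "F = 0")
      case True
      define a where "a = (G + 1) / c"
      have "a > 0" "G / a < c" using c assms by (simp_all add: a_def field_simps)
      then show False using bound[of a] True c by simp
    next
      case F: False
      then have "G = 0" using False assms by auto
      define a where "a = c / (F + 1)"
      have "a > 0" "a * F < c" using c assms by (simp_all add: a_def field_simps)
      then show False using bound[of a] \<open>G = 0\<close> c by simp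
    qed
  qed
qed

lemma l2_Cauchy_Schwarz:
  assumes f: "in_l2 m f" and g: "in_l2 m g"
  shows "cmod (l2_inner m f g) \<le> l2_norm m f * l2_norm m g"
proof -
  let ?n = "\<lambda>x. norm (complex_of_real ((m x)\<^sup>2) * cnj (f x) * g x)"
  have abs: "Infinite_Sum.abs_summable_on (\<lambda>x. complex_of_real ((m x)\<^sup>2) * cnj (f x) * g x) UNIV"
    using summable_on_iff_abs_summable_on_complex[THEN iffD1, OF l2_inner_summable[OF f g]] by simp
  have "(\<Sum>\<^sub>\<infinity>x. ?n x) \<le> (a * l2_sqnorm m f + l2_sqnorm m g / a) / 2" if a: "a > 0" for a
  proof -
    let ?F = "\<lambda>x. (m x)\<^sup>2 * (cmod (f x))\<^sup>2" and ?G = "\<lambda>x. (m x)\<^sup>2 * (cmod (g x))\<^sup>2"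
    have "(\<Sum>\<^sub>\<infinity>x. ?n x) \<le> (\<Sum>\<^sub>\<infinity>x. (a / 2) * ?F x + (1 / (2 * a)) * ?G x)"
    proof (rule infsum_mono)
      show "(\<lambda>x. (a / 2) * ?F x + (1 / (2 * a)) * ?G x) summable_on UNIV"
        using f g unfolding in_l2_def by (intro summable_on_add summable_on_cmult_right)
      fix x
      have "2 * a * (cmod (f x) * cmod (g x)) \<le> a\<^sup>2 * (cmod (f x))\<^sup>2 + (cmod (g x))\<^sup>2"
        using zero_le_power2[of "a * cmod (f x) - cmod (g x)"] by (simp add: power2_eq_square algebra_simps)
      then have "cmod (f x) * cmod (g x) \<le> (a / 2) * (cmod (f x))\<^sup>2 + (1 / (2 * a)) * (cmod (g x))\<^sup>2"
        using a by (simp add: field_simps power2_eq_square)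
      then have "(m x)\<^sup>2 * (cmod (f x) * cmod (g x))
          \<le> (m x)\<^sup>2 * ((a / 2) * (cmod (f x))\<^sup>2 + (1 / (2 * a)) * (cmod (g x))\<^sup>2)"
        by (rule mult_left_mono) simp
      then show "?n x \<le> (a / 2) * ?F x + (1 / (2 * a)) * ?G x"
        by (simp add: norm_mult norm_power algebra_simps)
    qed (use abs in simp)
    also have "\<dots> = (a / 2) * l2_sqnorm m f + (1 / (2 * a)) * l2_sqnorm m g"
      using f g unfolding l2_sqnorm_def in_l2_def
      by (simp only: infsum_add summable_on_cmult_right infsum_cmult_right')
    also have "\<dots> = (a * l2_sqnorm m f + l2_sqnorm m g / a) / 2"
      by (simp add: field_simps)
    finally show ?thesis .
  qed
  then have "(\<Sum>\<^sub>\<infinity>x. ?n x) \<le> sqrt (l2_sqnorm m f) * sqrt (l2_sqnorm m g)"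
    by (intro le_sqrt_mult_sqrt_if_le_weighted_means) (auto intro: infsum_nonneg l2_sqnorm_nonneg)
  moreover have "cmod (l2_inner m f g) \<le> (\<Sum>\<^sub>\<infinity>x. ?n x)"
    unfolding l2_inner_def by (rule norm_infsum_bound[OF abs])
  ultimately show ?thesis by (simp add: l2_norm_eq_sqrt)
qed

lemma l2_norm_diff_le:
  assumes a: "in_l2 m a" and b: "in_l2 m b"
  shows "l2_norm m (a - b) \<le> l2_norm m a + l2_norm m b"
proof -
  have "- Re (l2_inner m a b) \<le> l2_norm m a * l2_norm m b"
    using l2_Cauchy_Schwarz[OF a b] abs_Re_le_cmod[of "l2_inner m a b"] by linarith
  moreover have "(l2_norm m (a - b))\<^sup>2 = (l2_norm m a)\<^sup>2 + (l2_norm m b)\<^sup>2 - 2 * Re (l2_inner m a b)"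
    by (simp add: l2_norm_power2 l2_sqnorm_diff[OF a b])
  ultimately have "(l2_norm m (a - b))\<^sup>2 \<le> (l2_norm m a + l2_norm m b)\<^sup>2"
    by (simp add: power2_sum)
  then show ?thesis
    by (rule power2_le_imp_le) (simp add: l2_norm_nonneg add_nonneg_nonneg)
qed

lemma l2_norm_triangle:
  assumes "in_l2 m a" "in_l2 m b" "in_l2 m c"
  shows "l2_norm m (a - c) \<le> l2_norm m (a - b) + l2_norm m (b - c)"
proof -
  have "a - c = (a - b) - (c - b)" by (rule ext) simp
  then show ?thesis
    using l2_norm_diff_le[of m "a - b" "c - b"] assms by (simp add: in_l2_diff l2_norm_commute[of m c])
qed

lemma l2_norm_tendsto:
  assumes "\<And>n. in_l2 m (s n)" "in_l2 m a" "l2_tendsto m s a"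
  shows "(\<lambda>n. l2_norm m (s n)) \<longlonglongrightarrow> l2_norm m a"
proof -
  have zero: "in_l2 m (\<lambda>_. 0)" and minus_zero: "f - (\<lambda>_. 0) = f" for f :: "'a \<Rightarrow> complex"
    by (auto simp: in_l2_def)
  have reverse_triangle: "\<bar>l2_norm m (s n) - l2_norm m a\<bar> \<le> l2_norm m (s n - a)" for n
    using l2_norm_triangle[OF assms(1) assms(2) zero, of n] l2_norm_triangle[OF assms(2) assms(1) zero, of n]
    by (simp add: minus_zero l2_norm_commute[of m a])
  show ?thesis
    by (rule LIM_zero_cancel, rule Lim_null_comparison[OF _ assms(3)])
      (use reverse_triangle in auto)
qed

lemma l2_inner_tendsto_left:
  assumes "\<And>n. in_l2 m (s n)" "in_l2 m a" "in_l2 m c" "l2_tendsto m s a"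
  shows "(\<lambda>n. l2_inner m (s n) c) \<longlonglongrightarrow> l2_inner m a c"
proof -
  have "\<forall>n. cmod (l2_inner m (s n) c - l2_inner m a c) \<le> l2_norm m (s n - a) * l2_norm m c"
    using l2_Cauchy_Schwarz[of m "s _ - a" c] assms by (simp add: l2_inner_diff_left in_l2_diff)
  from Lim_null_comparison[OF always_eventually[OF this] tendsto_mult_left_zero[OF assms(4)]]
  show ?thesis by (rule LIM_zero_cancel)
qed

lemma l2_inner_tendsto_right:
  assumes "\<And>n. in_l2 m (s n)" "in_l2 m a" "in_l2 m c" "l2_tendsto m s a"
  shows "(\<lambda>n. l2_inner m c (s n)) \<longlonglongrightarrow> l2_inner m c a"
  using tendsto_cnj[OF l2_inner_tendsto_left[OF assms]] by (simp add: l2_inner_commute[of m c])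

lemma l2_Cauchy_if_tendsto:
  assumes "\<And>n. in_l2 m (s n)" "in_l2 m a" "l2_tendsto m s a"
  shows "l2_Cauchy m s"
  unfolding l2_Cauchy_def
proof (intro allI impI)
  fix e :: real assume "e > 0"
  then obtain N where "\<forall>n\<ge>N. norm (l2_norm m (s n - a) - 0) < e / 2"
    using LIMSEQ_D[OF assms(3), of "e / 2"] by auto
  then have N: "\<And>n. n \<ge> N \<Longrightarrow> l2_norm m (s n - a) < e / 2"
    by (simp add: l2_norm_nonneg)
  have "l2_norm m (s n - s k) < e" if "n \<ge> N" "k \<ge> N" for n k
    using l2_norm_triangle[OF assms(1) assms(2) assms(1), of n k] N[OF that(1)] N[OF that(2)]
    by (simp add: l2_norm_commute[of m a])
  then show "\<exists>N. \<forall>n\<ge>N. \<forall>k\<ge>N. l2_norm m (s n - s k) < e" by blast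
qed

lemma l2_Cauchy_if_dominated:
  assumes "l2_Cauchy m s" "C > 0" "\<And>n k. l2_norm m (t n - t k) \<le> C * l2_norm m (s n - s k)"
  shows "l2_Cauchy m t"
  unfolding l2_Cauchy_def
proof (intro allI impI)
  fix e :: real assume "e > 0"
  then obtain N where "\<forall>n\<ge>N. \<forall>k\<ge>N. l2_norm m (s n - s k) < e / C"
    using assms(1) divide_pos_pos[OF \<open>e > 0\<close> assms(2)] unfolding l2_Cauchy_def by blast
  moreover have "l2_norm m (t n - t k) < e" if "l2_norm m (s n - s k) < e / C" for n k
  proof -
    have "C * l2_norm m (s n - s k) < e" using that assms(2) by (simp add: field_simps)
    then show ?thesis using assms(3)[of n k] by linarith
  qed
  ultimately show "\<exists>N. \<forall>n\<ge>N. \<forall>k\<ge>N. l2_norm m (t n - t k) < e" by blast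
qed

lemma l2_eq_if_norm_diff_eq_0:
  assumes m_pos: "\<And>x. m x > 0" and "in_l2 m f" "in_l2 m g" "l2_norm m (f - g) = 0"
  shows "f = g"
proof
  fix x
  show "f x = g x"
    using norm_le_l2_norm[OF in_l2_diff[OF assms(2,3)] m_pos[of x]] assms(4) by simp
qed

lemma l2_tendsto_unique:
  assumes m_pos: "\<And>x. m x > 0" and "\<And>n. in_l2 m (s n)" "in_l2 m a" "in_l2 m b"
    and "l2_tendsto m s a" "l2_tendsto m s b"
  shows "a = b"
proof (rule l2_eq_if_norm_diff_eq_0[OF m_pos assms(3,4)])
  have "l2_norm m (a - b) \<le> l2_norm m (s n - a) + l2_norm m (s n - b)" for n
    using l2_norm_triangle[OF assms(3) assms(2) assms(4), of n] by (simp add: l2_norm_commute[of m a])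
  moreover have "(\<lambda>n. l2_norm m (s n - a) + l2_norm m (s n - b)) \<longlonglongrightarrow> 0"
    using tendsto_add[OF assms(5,6)] by simp
  ultimately have "l2_norm m (a - b) \<le> 0"
    by (intro LIMSEQ_le_const) auto
  then show "l2_norm m (a - b) = 0" using l2_norm_nonneg[of m "a - b"] by linarith
qed

lemma l2_tendsto_diff_cmult:
  assumes "\<And>n. in_l2 m (s n)" "\<And>n. in_l2 m (t n)" "in_l2 m a" "in_l2 m b"
    and "l2_tendsto m s a" "l2_tendsto m t b"
  shows "l2_tendsto m (\<lambda>n. s n - (\<lambda>x. c * t n x)) (a - (\<lambda>x. c * b x))"
proof -
  have "norm (l2_norm m ((s n - (\<lambda>x. c * t n x)) - (a - (\<lambda>x. c * b x))))
      \<le> l2_norm m (s n - a) + cmod c * l2_norm m (t n - b)" for n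
  proof -
    have eq: "(s n - (\<lambda>x. c * t n x)) - (a - (\<lambda>x. c * b x)) = (s n - a) - (\<lambda>x. c * (t n - b) x)"
      by (auto simp: algebra_simps)
    have "l2_norm m ((s n - a) - (\<lambda>x. c * (t n - b) x))
        \<le> l2_norm m (s n - a) + l2_norm m (\<lambda>x. c * (t n - b) x)"
      by (rule l2_norm_diff_le[OF in_l2_diff[OF assms(1,3)] in_l2_cmult[OF in_l2_diff[OF assms(2,4)]]])
    then show ?thesis unfolding eq l2_norm_cmult by (simp add: l2_norm_nonneg fun_diff_def)
  qed
  moreover have "(\<lambda>n. l2_norm m (s n - a) + cmod c * l2_norm m (t n - b)) \<longlonglongrightarrow> 0"
    using tendsto_add[OF assms(5) tendsto_mult_right_zero[OF assms(6)]] by simp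
  ultimately show ?thesis
    by (rule Lim_null_comparison[OF always_eventually[OF allI]])
qed

lemma l2_inner_eq_sum:
  assumes "finite S" "\<And>x. x \<notin> S \<Longrightarrow> cnj (a x) * c x = 0"
  shows "l2_inner m a c = (\<Sum>x\<in>S. complex_of_real ((m x)\<^sup>2) * cnj (a x) * c x)"
proof -
  have "l2_inner m a c = (\<Sum>\<^sub>\<infinity>x\<in>S. complex_of_real ((m x)\<^sup>2) * cnj (a x) * c x)"
    unfolding l2_inner_def by (rule infsum_cong_neutral) (use assms in \<open>auto simp: mult.assoc\<close>)
  then show ?thesis using assms(1) by simp
qed

lemma l2_inner_indicator: "l2_inner m w (indicator {x}) = complex_of_real ((m x)\<^sup>2) * cnj (w x)"
  by (subst l2_inner_eq_sum[of "{x}"]) auto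

lemma l2_eq_if_inner_Cc_eq:
  assumes m_pos: "\<And>x. m x > 0" and "\<And>f. f \<in> Cc \<Longrightarrow> l2_inner m g f = l2_inner m h f"
  shows "g = h"
proof
  fix x
  have "indicator {x} \<in> (Cc :: ('a \<Rightarrow> complex) set)" by (simp add: Cc_def indicator_def)
  from assms(2)[OF this]
  have "complex_of_real ((m x)\<^sup>2) * cnj (g x) = complex_of_real ((m x)\<^sup>2) * cnj (h x)"
    by (simp add: l2_inner_indicator)
  then show "g x = h x" using m_pos[of x] by simp
qed

lemma Cc_lincomb: "f \<in> Cc \<Longrightarrow> g \<in> Cc \<Longrightarrow> (\<lambda>x. a * f x + b * g x) \<in> Cc"
  unfolding Cc_def by (auto intro: finite_subset[of _ "{x. f x \<noteq> 0} \<union> {x. g x \<noteq> 0}"])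

lemma Cc_diff: "f \<in> Cc \<Longrightarrow> g \<in> Cc \<Longrightarrow> f - g \<in> Cc"
  unfolding Cc_def by (auto intro: finite_subset[of _ "{x. f x \<noteq> 0} \<union> {x. g x \<noteq> 0}"])

lemma Cc_dense:
  assumes u: "in_l2 m u" and e: "e > 0"
  obtains f where "f \<in> Cc" "l2_norm m (f - u) < e"
proof -
  let ?N = "\<lambda>x. (m x)\<^sup>2 * (cmod (u x))\<^sup>2"
  have N: "?N summable_on UNIV" using u by (simp add: in_l2_def)
  obtain F where F: "finite F" "dist (sum ?N F) (infsum ?N UNIV) \<le> e\<^sup>2 / 2"
    using infsum_finite_approximation[OF N, of "e\<^sup>2 / 2"] e by auto
  define f where "f x = (if x \<in> F then u x else 0)" for x
  have "f \<in> Cc" unfolding Cc_def using F(1) by (auto simp: f_def intro: finite_subset)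
  have outside: "(\<lambda>x. if x \<in> F then 0 else ?N x) summable_on UNIV"
    by (rule summable_on_comparison_test[OF N]) auto
  have inside: "(\<Sum>\<^sub>\<infinity>x. if x \<in> F then ?N x else 0) = sum ?N F"
    using infsum_cong_neutral[of F UNIV ?N "\<lambda>x. if x \<in> F then ?N x else 0"] F(1) by simp
  have "infsum ?N UNIV = (\<Sum>\<^sub>\<infinity>x. (if x \<in> F then ?N x else 0) + (if x \<in> F then 0 else ?N x))"
    by (rule infsum_cong) auto
  also have "\<dots> = sum ?N F + (\<Sum>\<^sub>\<infinity>x. if x \<in> F then 0 else ?N x)"
    using outside by (subst infsum_add) (auto intro: summable_on_comparison_test[OF N] simp: inside)
  finally have split: "(\<Sum>\<^sub>\<infinity>x. if x \<in> F then 0 else ?N x) = infsum ?N UNIV - sum ?N F"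
    by simp
  have "l2_sqnorm m (f - u) = (\<Sum>\<^sub>\<infinity>x. if x \<in> F then 0 else ?N x)"
    unfolding l2_sqnorm_def f_def by (rule infsum_cong) auto
  also have "\<dots> = infsum ?N UNIV - sum ?N F" by (rule split)
  also have "\<dots> < e\<^sup>2" using F(2) e by (simp add: dist_real_def abs_le_iff) (smt (verit) zero_less_power)
  finally show ?thesis using that \<open>f \<in> Cc\<close> l2_norm_less_iff_sqnorm_less[OF e] by blast
qed

section \<open>Completeness and orthogonal projection\<close>

lemma l2_sqnorm_le_if_pointwise_limit:
  assumes l2: "\<And>k. in_l2 m (g k)" and lim: "\<And>x. (\<lambda>k. g k x) \<longlonglongrightarrow> G x"
    and bound: "\<And>k. k \<ge> N \<Longrightarrow> l2_sqnorm m (g k) \<le> C"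
  shows "in_l2 m G" "l2_sqnorm m G \<le> C"
proof -
  have finite_sums: "(\<Sum>x\<in>F. (m x)\<^sup>2 * (cmod (G x))\<^sup>2) \<le> C" if "finite F" for F
  proof (rule LIMSEQ_le_const2)
    show "(\<lambda>k. \<Sum>x\<in>F. (m x)\<^sup>2 * (cmod (g k x))\<^sup>2) \<longlonglongrightarrow> (\<Sum>x\<in>F. (m x)\<^sup>2 * (cmod (G x))\<^sup>2)"
      by (intro tendsto_intros lim)
    have "(\<Sum>x\<in>F. (m x)\<^sup>2 * (cmod (g k x))\<^sup>2) \<le> l2_sqnorm m (g k)" for k
      unfolding l2_sqnorm_def
      by (rule finite_sum_le_infsum) (use \<open>finite F\<close> l2[of k] in \<open>auto simp: in_l2_def\<close>)
    then show "\<exists>N. \<forall>k\<ge>N. (\<Sum>x\<in>F. (m x)\<^sup>2 * (cmod (g k x))\<^sup>2) \<le> C"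
      using bound order_trans by blast
  qed
  show "in_l2 m G" unfolding in_l2_def
    by (rule nonneg_bdd_above_summable_on) (use finite_sums in \<open>auto intro!: bdd_aboveI2\<close>)
  then show "l2_sqnorm m G \<le> C" unfolding l2_sqnorm_def
    by (intro infsum_le_finite_sums) (use finite_sums in \<open>auto simp: in_l2_def\<close>)
qed

lemma Cauchy_if_l2_Cauchy:
  assumes m_pos: "\<And>x. m x > 0" and l2: "\<And>n. in_l2 m (s n)" and Cauchy: "l2_Cauchy m s"
  shows "Cauchy (\<lambda>n. s n x)"
proof (rule CauchyI)
  fix e :: real assume "e > 0"
  then obtain N where N: "\<forall>n\<ge>N. \<forall>k\<ge>N. l2_norm m (s n - s k) < e * m x"
    using Cauchy mult_pos_pos[OF \<open>e > 0\<close> m_pos[of x]] unfolding l2_Cauchy_def by blast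
  have "cmod (s n x - s k x) < e" if "n \<ge> N" "k \<ge> N" for n k
  proof -
    have "cmod (s n x - s k x) \<le> l2_norm m (s n - s k) / m x"
      using norm_le_l2_norm[OF in_l2_diff[OF l2 l2] m_pos] by simp
    also have "\<dots> < e" using N that m_pos[of x] by (simp add: pos_divide_less_eq)
    finally show ?thesis .
  qed
  then show "\<exists>M. \<forall>n\<ge>M. \<forall>k\<ge>M. norm (s n x - s k x) < e" by blast
qed

lemma l2_complete:
  assumes m_pos: "\<And>x. m x > 0" and l2: "\<And>n. in_l2 m (s n)" and Cauchy: "l2_Cauchy m s"
  obtains f where "in_l2 m f" "l2_tendsto m s f"
proof -
  have pointwise_Cauchy: "Cauchy (\<lambda>n. s n x)" for x
    using m_pos l2 Cauchy by (rule Cauchy_if_l2_Cauchy)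
  define f where "f x = lim (\<lambda>n. s n x)" for x
  have lim: "(\<lambda>k. (s n - s k) x) \<longlonglongrightarrow> (s n - f) x" for n x
    using pointwise_Cauchy[of x] unfolding f_def
    by (auto intro!: tendsto_diff simp: Cauchy_convergent_iff convergent_LIMSEQ_iff)
  have tail: "in_l2 m (s n - f) \<and> l2_sqnorm m (s n - f) \<le> e\<^sup>2"
    if N: "\<forall>n\<ge>N. \<forall>k\<ge>N. l2_norm m (s n - s k) < e" and "n \<ge> N" for e N n
  proof -
    have "l2_sqnorm m (s n - s k) \<le> e\<^sup>2" if "k \<ge> N" for k
      using N \<open>n \<ge> N\<close> that power_mono[of "l2_norm m (s n - s k)" e 2]
      by (auto simp: less_imp_le l2_norm_nonneg l2_norm_power2)
    then show ?thesis
      using l2_sqnorm_le_if_pointwise_limit[OF in_l2_diff[OF l2 l2] lim] by blast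
  qed
  obtain N1 where N1: "\<forall>n\<ge>N1. \<forall>k\<ge>N1. l2_norm m (s n - s k) < 1"
    using Cauchy unfolding l2_Cauchy_def by fastforce
  have "in_l2 m (s N1 - (s N1 - f))"
    using in_l2_diff[OF l2[of N1] conjunct1[OF tail[OF N1 order_refl]]] .
  moreover have "s N1 - (s N1 - f) = f" by (rule ext) simp
  ultimately have "in_l2 m f" by simp
  moreover have "l2_tendsto m s f"
  proof (rule LIMSEQ_I)
    fix r :: real assume "r > 0"
    then obtain N where N: "\<forall>n\<ge>N. \<forall>k\<ge>N. l2_norm m (s n - s k) < r / 2"
      using Cauchy half_gt_zero[OF \<open>r > 0\<close>] unfolding l2_Cauchy_def by blast
    have "l2_norm m (s n - f) < r" if "n \<ge> N" for n
    proof -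
      have "(r / 2)\<^sup>2 < r\<^sup>2" using \<open>r > 0\<close> by (intro power_strict_mono) auto
      then have "l2_sqnorm m (s n - f) < r\<^sup>2"
        using tail[OF N that] by linarith
      then show ?thesis using l2_norm_less_iff_sqnorm_less \<open>r > 0\<close> by blast
    qed
    then show "\<exists>N. \<forall>n\<ge>N. norm (l2_norm m (s n - f) - 0) < r"
      by (auto simp: l2_norm_nonneg)
  qed
  ultimately show ?thesis using that by blast
qed

lemma l2_inner_eq_0_if_norm_minimal:
  assumes r: "in_l2 m r" and q: "in_l2 m q"
    and minimal: "\<And>t. l2_norm m r \<le> l2_norm m (r - (\<lambda>x. t * q x))"
  shows "l2_inner m r q = 0"
proof (rule ccontr)
  assume "l2_inner m r q \<noteq> 0"
  define z where "z = l2_inner m r q"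
  have "z \<noteq> 0" using \<open>l2_inner m r q \<noteq> 0\<close> by (simp add: z_def)
  define Q where "Q = l2_sqnorm m q"
  define s where "s = 1 / (Q + 1)"
  have Q: "Q \<ge> 0" and s: "s > 0" "s * Q < 1"
    using l2_sqnorm_nonneg[of m q] by (auto simp: Q_def s_def field_simps)
  \<comment> \<open>Moving a short distance from r in the direction cnj z decreases the norm.\<close>
  define t where "t = complex_of_real s * cnj z"
  have "l2_sqnorm m r \<le> l2_sqnorm m (r - (\<lambda>x. t * q x))"
    using minimal[of t] by (simp flip: l2_norm_power2 add: power_mono l2_norm_nonneg)
  also have "\<dots> = l2_sqnorm m r + (cmod t)\<^sup>2 * Q - 2 * Re (t * z)"
    by (simp add: l2_sqnorm_diff[OF r in_l2_cmult[OF q]] l2_sqnorm_cmult l2_inner_cmult_right Q_def z_def)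
  also have "t * z = complex_of_real (s * (cmod z)\<^sup>2)"
    unfolding t_def of_real_mult complex_norm_square by (simp add: ac_simps)
  finally have "2 * s * (cmod z)\<^sup>2 \<le> (s * Q) * (s * (cmod z)\<^sup>2)"
    by (simp add: t_def norm_mult power_mult_distrib power2_eq_square algebra_simps)
  moreover have "(s * Q) * (s * (cmod z)\<^sup>2) < 1 * (s * (cmod z)\<^sup>2)"
    using s \<open>z \<noteq> 0\<close> by (intro mult_strict_right_mono) auto
  moreover have "s * (cmod z)\<^sup>2 > 0" using s \<open>z \<noteq> 0\<close> by simp
  ultimately show False by linarith
qed

lemma l2_sqnorm_parallelogram:
  assumes "in_l2 m a" "in_l2 m b"
  shows "l2_sqnorm m (a - b) + l2_sqnorm m (\<lambda>x. a x + b x) = 2 * l2_sqnorm m a + 2 * l2_sqnorm m b"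
  by (simp add: l2_sqnorm_diff[OF assms] l2_sqnorm_add[OF assms])

lemma l2_Cauchy_if_minimizing:
  assumes S_l2: "\<And>t. t \<in> S \<Longrightarrow> in_l2 m t"
    and S_lincomb: "\<And>s t a b. s \<in> S \<Longrightarrow> t \<in> S \<Longrightarrow> (\<lambda>x. a * s x + b * t x) \<in> S"
    and h: "in_l2 m h" and lower: "\<And>t. t \<in> S \<Longrightarrow> \<delta> \<le> l2_norm m (h - t)"
    and s: "\<And>n. s n \<in> S" and lim: "(\<lambda>n. l2_norm m (h - s n)) \<longlonglongrightarrow> \<delta>"
  shows "l2_Cauchy m s"
proof -
  have "\<delta> \<ge> 0" by (rule LIMSEQ_le_const[OF lim]) (simp add: l2_norm_nonneg)
  have hs: "in_l2 m (h - s n)" for n by (intro in_l2_diff h S_l2 s)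
  have parallelogram: "l2_sqnorm m (s n - s j)
      \<le> 2 * (l2_norm m (h - s n))\<^sup>2 + 2 * (l2_norm m (h - s j))\<^sup>2 - 4 * \<delta>\<^sup>2" for n j
  proof -
    define mid where "mid = (\<lambda>x. (1/2) * s n x + (1/2) * s j x)"
    have "mid \<in> S" unfolding mid_def by (intro S_lincomb s)
    then have "\<delta>\<^sup>2 \<le> (l2_norm m (h - mid))\<^sup>2"
      using lower \<open>\<delta> \<ge> 0\<close> by (intro power_mono) auto
    moreover have sum_eq: "(\<lambda>x. (h - s j) x + (h - s n) x) = (\<lambda>x. 2 * (h - mid) x)"
      by (auto simp: mid_def algebra_simps)
    have "l2_sqnorm m (\<lambda>x. (h - s j) x + (h - s n) x) = 4 * l2_sqnorm m (h - mid)"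
      unfolding sum_eq l2_sqnorm_cmult by (simp add: fun_diff_def)
    moreover have "(h - s j) - (h - s n) = s n - s j" by (rule ext) simp
    ultimately show ?thesis
      using l2_sqnorm_parallelogram[OF hs[of j] hs[of n]] by (simp add: l2_norm_power2)
  qed
  show ?thesis
    unfolding l2_Cauchy_def
  proof (intro allI impI)
    fix e :: real assume "e > 0"
    have "(\<lambda>n. (l2_norm m (h - s n))\<^sup>2) \<longlonglongrightarrow> \<delta>\<^sup>2" by (intro tendsto_power lim)
    moreover have "\<delta>\<^sup>2 < \<delta>\<^sup>2 + e\<^sup>2 / 4" using \<open>e > 0\<close> by simp
    ultimately have "\<forall>\<^sub>F n in sequentially. (l2_norm m (h - s n))\<^sup>2 < \<delta>\<^sup>2 + e\<^sup>2 / 4"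
      by (rule order_tendstoD(2))
    then obtain N where N: "\<And>n. n \<ge> N \<Longrightarrow> (l2_norm m (h - s n))\<^sup>2 < \<delta>\<^sup>2 + e\<^sup>2 / 4"
      unfolding eventually_sequentially by blast
    have "l2_sqnorm m (s n - s j) < e\<^sup>2" if "n \<ge> N" "j \<ge> N" for n j
      using parallelogram[of n j] N[OF that(1)] N[OF that(2)] by linarith
    then have "l2_norm m (s n - s j) < e" if "n \<ge> N" "j \<ge> N" for n j
      using that l2_norm_less_iff_sqnorm_less[OF \<open>e > 0\<close>] by blast
    then show "\<exists>N. \<forall>n\<ge>N. \<forall>k\<ge>N. l2_norm m (s n - s k) < e" by blast
  qed
qed

lemma l2_inner_eq_0_if_closest_limit:
  assumes S_l2: "\<And>t. t \<in> S \<Longrightarrow> in_l2 m t"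
    and S_lincomb: "\<And>s t a b. s \<in> S \<Longrightarrow> t \<in> S \<Longrightarrow> (\<lambda>x. a * s x + b * t x) \<in> S"
    and h: "in_l2 m h" and s: "\<And>n. s n \<in> S" and k: "in_l2 m k" "l2_tendsto m s k"
    and closest: "\<And>t. t \<in> S \<Longrightarrow> l2_norm m (h - k) \<le> l2_norm m (h - t)"
    and t: "t \<in> S"
  shows "l2_inner m (h - k) t = 0"
proof (rule l2_inner_eq_0_if_norm_minimal)
  fix c
  have u: "(\<lambda>x. 1 * s n x + c * t x) \<in> S" for n by (intro S_lincomb s t)
  have "(\<lambda>n. l2_norm m (h - (\<lambda>x. 1 * s n x + c * t x))) \<longlonglongrightarrow> l2_norm m ((h - k) - (\<lambda>x. c * t x))"
  proof (rule l2_norm_tendsto)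
    have "(h - (\<lambda>x. 1 * s n x + c * t x)) - ((h - k) - (\<lambda>x. c * t x)) = k - s n" for n
      by (rule ext) simp
    then show "l2_tendsto m (\<lambda>n. h - (\<lambda>x. 1 * s n x + c * t x)) ((h - k) - (\<lambda>x. c * t x))"
      using k(2) by (simp add: l2_norm_commute[of m k])
  qed (use h k S_l2[OF u] S_l2[OF t] in \<open>auto intro: in_l2_diff in_l2_cmult\<close>)
  then show "l2_norm m (h - k) \<le> l2_norm m ((h - k) - (\<lambda>x. c * t x))"
    by (rule LIMSEQ_le_const) (use closest[OF u] in auto)
qed (use h k S_l2[OF t] in \<open>auto intro: in_l2_diff\<close>)

lemma l2_projection:
  assumes m_pos: "\<And>x. m x > 0"
    and S_l2: "\<And>t. t \<in> S \<Longrightarrow> in_l2 m t" and "S \<noteq> {}"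
    and S_lincomb: "\<And>s t a b. s \<in> S \<Longrightarrow> t \<in> S \<Longrightarrow> (\<lambda>x. a * s x + b * t x) \<in> S"
    and h: "in_l2 m h"
  shows "\<exists>s k. (\<forall>n. s n \<in> S) \<and> in_l2 m k \<and> l2_tendsto m s k
    \<and> (\<forall>t\<in>S. l2_inner m (h - k) t = 0)"
proof -
  define \<delta> where "\<delta> = Inf ((\<lambda>t. l2_norm m (h - t)) ` S)"
  have lower: "\<delta> \<le> l2_norm m (h - t)" if "t \<in> S" for t
    unfolding \<delta>_def using that by (intro cInf_lower bdd_belowI2[of _ 0]) (auto simp: l2_norm_nonneg)
  have "\<exists>t. t \<in> S \<and> l2_norm m (h - t) < \<delta> + inverse (real (Suc n))" for n
    using cInf_lessD[of "(\<lambda>t. l2_norm m (h - t)) ` S" "\<delta> + inverse (real (Suc n))"] \<open>S \<noteq> {}\<close>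
    by (auto simp: \<delta>_def)
  then obtain s where s: "\<And>n. s n \<in> S" and s_close: "\<And>n. l2_norm m (h - s n) < \<delta> + inverse (real (Suc n))"
    by metis
  have lim: "(\<lambda>n. l2_norm m (h - s n)) \<longlonglongrightarrow> \<delta>"
  proof (rule tendsto_sandwich[of "\<lambda>_. \<delta>"])
    have "(\<lambda>n. \<delta> + inverse (real (Suc n))) \<longlonglongrightarrow> \<delta> + 0"
      by (intro tendsto_add tendsto_const LIMSEQ_inverse_real_of_nat)
    then show "(\<lambda>n. \<delta> + inverse (real (Suc n))) \<longlonglongrightarrow> \<delta>" by simp
    show "\<forall>\<^sub>F n in sequentially. \<delta> \<le> l2_norm m (h - s n)"
      using lower[OF s] by (rule always_eventually[OF allI])
    show "\<forall>\<^sub>F n in sequentially. l2_norm m (h - s n) \<le> \<delta> + inverse (real (Suc n))"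
      using less_imp_le[OF s_close] by (rule always_eventually[OF allI])
  qed simp
  have "l2_Cauchy m s"
    by (rule l2_Cauchy_if_minimizing[OF S_l2 S_lincomb h lower s lim])
  then obtain k where k: "in_l2 m k" "l2_tendsto m s k"
    by (rule l2_complete[OF m_pos S_l2[OF s]])
  have "(\<lambda>n. l2_norm m (h - s n)) \<longlonglongrightarrow> l2_norm m (h - k)"
  proof (rule l2_norm_tendsto)
    have "(h - s n) - (h - k) = k - s n" for n by (rule ext) simp
    then show "l2_tendsto m (\<lambda>n. h - s n) (h - k)"
      using k(2) by (simp add: l2_norm_commute[of m k])
  qed (use h k S_l2 s in \<open>auto intro: in_l2_diff\<close>)
  then have hk: "l2_norm m (h - k) = \<delta>" using lim by (rule LIMSEQ_unique)
  have "l2_inner m (h - k) t = 0" if "t \<in> S" for t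
    by (rule l2_inner_eq_0_if_closest_limit[OF S_l2 S_lincomb h _ k _ that]) (use s lower hk in auto)
  with s k show ?thesis by blast
qed

section \<open>The magnetic Schroedinger operator\<close>

locale weighted_graph =
  fixes E :: "'v \<Rightarrow> 'v \<Rightarrow> real" and m :: "'v \<Rightarrow> real"
    and \<theta> :: "'v \<Rightarrow> 'v \<Rightarrow> real" and V :: "'v \<Rightarrow> real"
  assumes E_nonneg: "\<And>x y. E x y \<ge> 0" and E_sym: "\<And>x y. E x y = E y x"
    and m_pos: "\<And>x. m x > 0" and \<theta>_antisym: "\<And>x y. \<theta> x y = - \<theta> y x"
    and locally_finite: "\<And>x. finite {y. E x y > 0}"
begin

abbreviation "H \<equiv> Hop E m \<theta> V"
abbreviation "d \<equiv> weighted_degree E m"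
abbreviation "phase x y \<equiv> exp (\<i> * complex_of_real (\<theta> x y))"

definition neighbourhood :: "'v set \<Rightarrow> 'v set" where
  "neighbourhood F = F \<union> (\<Union>x\<in>F. {y. E x y \<noteq> 0})"

lemma finite_neighbours: "finite {y. E x y \<noteq> 0}"
proof -
  have "{y. E x y \<noteq> 0} = {y. E x y > 0}" using E_nonneg[of x] by (auto simp: less_le)
  then show ?thesis using locally_finite[of x] by simp
qed

lemma finite_neighbourhood: "finite F \<Longrightarrow> finite (neighbourhood F)"
  unfolding neighbourhood_def using finite_neighbours by auto

lemma degree_eq: "(\<Sum>y\<in>{y. E x y \<noteq> 0}. E x y) = (m x)\<^sup>2 * d x"
  using m_pos[of x] by (simp add: weighted_degree_def)

lemma Hop_eq_sum:
  assumes "finite S" "\<And>y. E x y \<noteq> 0 \<Longrightarrow> f y \<noteq> 0 \<Longrightarrow> y \<in> S"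
  shows "H f x = complex_of_real (d x + V x) * f x
    - complex_of_real (1 / (m x)\<^sup>2) * (\<Sum>y\<in>S. complex_of_real (E x y) * phase x y * f y)"
proof -
  let ?N = "{y. E x y \<noteq> 0}"
  have "(\<Sum>y\<in>?N. complex_of_real (E x y) * (f x - phase x y * f y))
      = complex_of_real ((m x)\<^sup>2 * d x) * f x - (\<Sum>y\<in>?N. complex_of_real (E x y) * phase x y * f y)"
    by (simp add: right_diff_distrib sum_subtractf sum_distrib_right mult.assoc flip: degree_eq)
  also have "(\<Sum>y\<in>?N. complex_of_real (E x y) * phase x y * f y)
      = (\<Sum>y\<in>S. complex_of_real (E x y) * phase x y * f y)"
    by (rule sum.same_carrierI[of "?N \<union> S"]) (use assms finite_neighbours in auto)
  finally show ?thesis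
    using m_pos[of x] unfolding Hop_def by (simp add: field_simps)
qed

lemma Hop_lincomb: "H (\<lambda>x. a * f x + b * g x) = (\<lambda>x. a * H f x + b * H g x)"
  unfolding Hop_def
  by (simp add: algebra_simps sum.distrib sum_distrib_left sum_subtractf)

lemma Hop_diff: "H (f - g) = H f - H g"
  using Hop_lincomb[of 1 f "-1" g] by (simp add: fun_diff_def)

lemma Hop_eq_0_outside: "x \<notin> neighbourhood {y. f y \<noteq> 0} \<Longrightarrow> H f x = 0"
  using Hop_eq_sum[of "{}" x f] E_sym[of x] by (auto simp: neighbourhood_def Hop_def)

lemma Hop_Cc: "f \<in> Cc \<Longrightarrow> H f \<in> Cc"
  unfolding Cc_def mem_Collect_eq
  by (rule finite_subset[OF _ finite_neighbourhood]) (use Hop_eq_0_outside in blast)+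

lemma Hop_symmetric:
  assumes f: "f \<in> Cc"
  shows "l2_inner m u (H f) = l2_inner m (H u) f"
proof -
  \<comment> \<open>Both sides are the same double sum over the neighbourhood of the support of f:
    symmetry of E and antisymmetry of \<theta> exchange its two indices.\<close>
  define S where "S = neighbourhood {x. f x \<noteq> 0}"
  have S: "finite S" using f by (simp add: S_def Cc_def finite_neighbourhood)
  have supp: "f x \<noteq> 0 \<Longrightarrow> x \<in> S" and nbr: "f x \<noteq> 0 \<Longrightarrow> E x y \<noteq> 0 \<Longrightarrow> y \<in> S" for x y
    by (auto simp: S_def neighbourhood_def)
  let ?T = "\<lambda>x y. complex_of_real (E x y) * phase x y * cnj (u x) * f y"
  let ?D = "\<lambda>x. complex_of_real ((m x)\<^sup>2 * (d x + V x)) * cnj (u x) * f x"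
  have left: "complex_of_real ((m x)\<^sup>2) * cnj (u x) * H f x = ?D x - (\<Sum>y\<in>S. ?T x y)" for x
    using m_pos[of x]
    by (simp add: Hop_eq_sum[OF S, of x f] supp sum_distrib_left algebra_simps)
  have right: "complex_of_real ((m x)\<^sup>2) * cnj (H u x) * f x = ?D x - (\<Sum>y\<in>S. ?T y x)" for x
  proof (cases "f x = 0")
    case False
    have "phase y x = cnj (phase x y)" for y by (simp add: exp_cnj \<theta>_antisym[of x y])
    then show ?thesis
      using m_pos[of x]
      by (simp add: Hop_eq_sum[OF S, of x u] nbr[OF False] E_sym[of _ x] sum_distrib_left
          sum_distrib_right algebra_simps)
  qed simp
  have "l2_inner m u (H f) = (\<Sum>x\<in>S. complex_of_real ((m x)\<^sup>2) * cnj (u x) * H f x)"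
    by (rule l2_inner_eq_sum[OF S]) (simp add: S_def Hop_eq_0_outside)
  also have "\<dots> = (\<Sum>x\<in>S. ?D x) - (\<Sum>x\<in>S. \<Sum>y\<in>S. ?T x y)"
    by (simp only: left sum_subtractf)
  also have "(\<Sum>x\<in>S. \<Sum>y\<in>S. ?T x y) = (\<Sum>x\<in>S. \<Sum>y\<in>S. ?T y x)"
    by (rule sum.swap)
  also have "(\<Sum>x\<in>S. ?D x) - \<dots> = (\<Sum>x\<in>S. complex_of_real ((m x)\<^sup>2) * cnj (H u x) * f x)"
    by (simp only: right sum_subtractf)
  also have "\<dots> = l2_inner m (H u) f"
    by (rule l2_inner_eq_sum[OF S, symmetric]) (use supp in auto)
  finally show ?thesis .
qed

lemma Hop_eq_if_l2_inner_eq: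
  assumes "\<And>f. f \<in> Cc \<Longrightarrow> l2_inner m u (H f) = l2_inner m w f"
  shows "H u = w"
proof (rule l2_eq_if_inner_Cc_eq[OF m_pos])
  fix f :: "'v \<Rightarrow> complex" assume "f \<in> Cc"
  then show "l2_inner m (H u) f = l2_inner m w f"
    using Hop_symmetric[of f u] assms[of f] by simp
qed

abbreviation "A \<equiv> graph_H_Cc E m \<theta> V"

lemma graph_memI: "f \<in> Cc \<Longrightarrow> (f, H f) \<in> A"
  unfolding graph_H_Cc_def by auto

lemma graph_memE: "p \<in> A \<Longrightarrow> fst p \<in> Cc \<and> snd p = H (fst p)"
  unfolding graph_H_Cc_def by auto

lemma Hop_Cc_in_l2: "f \<in> Cc \<Longrightarrow> in_l2 m (H f)"
  by (rule Cc_in_l2[OF Hop_Cc])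

lemma graph_subset_closure: "A \<subseteq> l2_closure m A"
proof
  fix p assume "p \<in> A"
  then obtain f where f: "f \<in> Cc" "p = (f, H f)" unfolding graph_H_Cc_def by auto
  have "l2_norm m (a - a) = 0" for a :: "'v \<Rightarrow> complex" by (simp add: l2_norm_def)
  then show "p \<in> l2_closure m A"
    unfolding l2_closure_def using f Cc_in_l2[of f] Hop_Cc_in_l2[of f] graph_memI
    by (auto intro!: exI[of _ "\<lambda>_. (f, H f)"])
qed

lemma closure_l2_inner_Hop:
  assumes fg: "(f, g) \<in> l2_closure m A" and "f' \<in> Cc"
  shows "l2_inner m f (H f') = l2_inner m g f'"
proof -
  obtain s where s: "\<And>n. s n \<in> A" "l2_tendsto m (\<lambda>n. fst (s n)) f" "l2_tendsto m (\<lambda>n. snd (s n)) g"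
    and l2: "in_l2 m f" "in_l2 m g"
    using fg unfolding l2_closure_def by auto
  have sC: "fst (s n) \<in> Cc" "snd (s n) = H (fst (s n))" for n using graph_memE[OF s(1)] by auto
  have "(\<lambda>n. l2_inner m (fst (s n)) (H f')) \<longlonglongrightarrow> l2_inner m f (H f')"
    by (rule l2_inner_tendsto_left) (use sC \<open>f' \<in> Cc\<close> l2 s in \<open>auto simp: Cc_in_l2 Hop_Cc_in_l2\<close>)
  moreover have "(\<lambda>n. l2_inner m (snd (s n)) f') \<longlonglongrightarrow> l2_inner m g f'"
    by (rule l2_inner_tendsto_left) (use sC \<open>f' \<in> Cc\<close> l2 s in \<open>auto simp: Cc_in_l2 Hop_Cc_in_l2\<close>)
  moreover have "l2_inner m (fst (s n)) (H f') = l2_inner m (snd (s n)) f'" for n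
    using Hop_symmetric[OF \<open>f' \<in> Cc\<close>] sC(2)[of n] by simp
  ultimately show ?thesis using LIMSEQ_unique by fastforce
qed

lemma densely_defined_graph: "densely_defined_operator m A"
  unfolding densely_defined_operator_def
proof (intro conjI allI impI ballI)
  show "case p of (f, g) \<Rightarrow> in_l2 m f \<and> in_l2 m g" if "p \<in> A" for p
    using that unfolding graph_H_Cc_def by (auto simp: Cc_in_l2 Hop_Cc_in_l2)
  show "g = h" if "(f, g) \<in> A" "(f, h) \<in> A" for f g h
    using that unfolding graph_H_Cc_def by auto
  fix u :: "'v \<Rightarrow> complex" and e :: real assume "in_l2 m u" "e > 0"
  then obtain f where "f \<in> Cc" "l2_norm m (f - u) < e" by (rule Cc_dense)
  then show "\<exists>(f, g)\<in>A. l2_norm m (f - u) < e" using graph_memI by blast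
qed

lemma densely_defined_closure: "densely_defined_operator m (l2_closure m A)"
  unfolding densely_defined_operator_def
proof (intro conjI allI impI ballI)
  show "case p of (f, g) \<Rightarrow> in_l2 m f \<and> in_l2 m g" if "p \<in> l2_closure m A" for p
    using that unfolding l2_closure_def by auto
  show "g = h" if "(f, g) \<in> l2_closure m A" "(f, h) \<in> l2_closure m A" for f g h
  proof (rule l2_eq_if_inner_Cc_eq[OF m_pos])
    fix f' :: "'v \<Rightarrow> complex" assume "f' \<in> Cc"
    then show "l2_inner m g f' = l2_inner m h f'"
      using closure_l2_inner_Hop[OF that(1)] closure_l2_inner_Hop[OF that(2)] by simp
  qed
  fix u :: "'v \<Rightarrow> complex" and e :: real assume "in_l2 m u" "e > 0"
  then obtain f where "f \<in> Cc" "l2_norm m (f - u) < e" by (rule Cc_dense)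
  then show "\<exists>(f, g)\<in>l2_closure m A. l2_norm m (f - u) < e"
    using graph_subset_closure graph_memI by blast
qed

lemma closure_subset_adjoint: "l2_closure m A \<subseteq> l2_adjoint m (l2_closure m A)"
proof clarify
  fix f g assume fg: "(f, g) \<in> l2_closure m A"
  have l2: "in_l2 m f" "in_l2 m g" using fg unfolding l2_closure_def by auto
  have "l2_inner m f g' = l2_inner m g f'" if fg': "(f', g') \<in> l2_closure m A" for f' g'
  proof -
    obtain s where s: "\<And>n. s n \<in> A" "l2_tendsto m (\<lambda>n. fst (s n)) f'" "l2_tendsto m (\<lambda>n. snd (s n)) g'"
      and l2': "in_l2 m f'" "in_l2 m g'"
      using fg' unfolding l2_closure_def by auto
    have sC: "fst (s n) \<in> Cc" "snd (s n) = H (fst (s n))" for n using graph_memE[OF s(1)] by auto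
    have "(\<lambda>n. l2_inner m f (snd (s n))) \<longlonglongrightarrow> l2_inner m f g'"
      by (rule l2_inner_tendsto_right) (use sC l2 l2' s in \<open>auto simp: Cc_in_l2 Hop_Cc_in_l2\<close>)
    moreover have "(\<lambda>n. l2_inner m g (fst (s n))) \<longlonglongrightarrow> l2_inner m g f'"
      by (rule l2_inner_tendsto_right) (use sC l2 l2' s in \<open>auto simp: Cc_in_l2\<close>)
    moreover have "l2_inner m f (snd (s n)) = l2_inner m g (fst (s n))" for n
      using closure_l2_inner_Hop[OF fg sC(1)[of n]] sC(2)[of n] by simp
    ultimately show ?thesis using LIMSEQ_unique by fastforce
  qed
  then show "(f, g) \<in> l2_adjoint m (l2_closure m A)" unfolding l2_adjoint_def using l2 by auto
qed

lemma l2_sqnorm_Hop_shift: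
  assumes "f \<in> Cc"
  shows "l2_sqnorm m (H f - (\<lambda>x. \<i> * \<kappa> * f x)) = l2_sqnorm m (H f) + \<kappa>\<^sup>2 * l2_sqnorm m f"
proof -
  \<comment> \<open>The cross term vanishes because the inner product of H f with f is real.\<close>
  have "l2_inner m (H f) f = l2_inner m f (H f)" by (rule Hop_symmetric[OF assms, symmetric])
  also have "\<dots> = cnj (l2_inner m (H f) f)" by (rule l2_inner_commute)
  finally have "Im (l2_inner m (H f) f) = 0"
    by (simp add: complex_eq_iff)
  then have "Re (l2_inner m (H f) (\<lambda>x. \<i> * \<kappa> * f x)) = 0"
    by (simp add: l2_inner_cmult_right)
  then show ?thesis
    using assms by (simp add: l2_sqnorm_diff Cc_in_l2 Hop_Cc_in_l2 in_l2_cmult l2_sqnorm_cmult norm_mult)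
qed

lemma closure_graph_if_Cauchy:
  assumes "\<And>n. fs n \<in> Cc" "l2_Cauchy m fs" "l2_Cauchy m (\<lambda>n. H (fs n))"
  shows "\<exists>f g. (f, g) \<in> l2_closure m A \<and> l2_tendsto m fs f \<and> l2_tendsto m (\<lambda>n. H (fs n)) g"
proof -
  obtain f where f: "in_l2 m f" "l2_tendsto m fs f"
    using l2_complete[OF m_pos Cc_in_l2[OF assms(1)] assms(2)] by blast
  obtain g where g: "in_l2 m g" "l2_tendsto m (\<lambda>n. H (fs n)) g"
    using l2_complete[OF m_pos Hop_Cc_in_l2[OF assms(1)] assms(3)] by blast
  have "(f, g) \<in> l2_closure m A"
    unfolding l2_closure_def using f g graph_memI[OF assms(1)]
    by (auto intro!: exI[of _ "\<lambda>n. (fs n, H (fs n))"])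
  with f g show ?thesis by blast
qed

lemma Hop_eq_if_orthogonal_to_shifted_range:
  fixes \<kappa> :: real
  assumes "in_l2 m r" "\<And>f. f \<in> Cc \<Longrightarrow> l2_inner m r (H f - (\<lambda>x. \<i> * \<kappa> * f x)) = 0"
  shows "H r = (\<lambda>x. - \<i> * \<kappa> * r x)"
proof (rule Hop_eq_if_l2_inner_eq)
  fix f :: "'v \<Rightarrow> complex" assume "f \<in> Cc"
  then have "l2_inner m r (H f) = l2_inner m r (\<lambda>x. \<i> * \<kappa> * f x)"
    using assms l2_inner_diff_right[of m "H f" "\<lambda>x. \<i> * \<kappa> * f x" r]
    by (simp add: Hop_Cc_in_l2 Cc_in_l2 in_l2_cmult)
  then show "l2_inner m r (H f) = l2_inner m (\<lambda>x. - \<i> * \<kappa> * r x) f"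
    using l2_inner_cmult_left[of m "- \<i> * \<kappa>" r f] l2_inner_cmult_right[of m r "\<i> * \<kappa>" f] by simp
qed

lemma l2_Cauchy_if_shifted_Cauchy:
  fixes \<kappa> :: real
  assumes "\<kappa> \<noteq> 0" and fs: "\<And>n. fs n \<in> Cc"
    and Cauchy: "l2_Cauchy m (\<lambda>n. H (fs n) - (\<lambda>x. \<i> * \<kappa> * fs n x))"
  shows "l2_Cauchy m fs \<and> l2_Cauchy m (\<lambda>n. H (fs n))"
proof
  let ?s = "\<lambda>n. H (fs n) - (\<lambda>x. \<i> * \<kappa> * fs n x)"
  have split: "l2_sqnorm m (?s n - ?s j) = l2_sqnorm m (H (fs n) - H (fs j))
      + \<kappa>\<^sup>2 * l2_sqnorm m (fs n - fs j)" for n j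
  proof -
    have "?s n - ?s j = H (fs n - fs j) - (\<lambda>x. \<i> * \<kappa> * (fs n - fs j) x)"
      by (auto simp: Hop_diff algebra_simps)
    then show ?thesis
      using l2_sqnorm_Hop_shift[OF Cc_diff[OF fs[of n] fs[of j]], where \<kappa> = \<kappa>] by (simp add: Hop_diff)
  qed
  show "l2_Cauchy m fs"
  proof (rule l2_Cauchy_if_dominated[OF Cauchy, of "1 / \<bar>\<kappa>\<bar>"])
    fix n j
    have "(\<bar>\<kappa>\<bar> * l2_norm m (fs n - fs j))\<^sup>2 \<le> (l2_norm m (?s n - ?s j))\<^sup>2"
      using split[of n j] l2_sqnorm_nonneg by (simp add: l2_norm_power2 power_mult_distrib)
    then have "\<bar>\<kappa>\<bar> * l2_norm m (fs n - fs j) \<le> l2_norm m (?s n - ?s j)"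
      by (rule power2_le_imp_le) (simp add: l2_norm_nonneg)
    then show "l2_norm m (fs n - fs j) \<le> 1 / \<bar>\<kappa>\<bar> * l2_norm m (?s n - ?s j)"
      using \<open>\<kappa> \<noteq> 0\<close> by (simp add: field_simps)
  qed (use \<open>\<kappa> \<noteq> 0\<close> in simp)
  show "l2_Cauchy m (\<lambda>n. H (fs n))"
  proof (rule l2_Cauchy_if_dominated[OF Cauchy, of 1])
    fix n j
    have "0 \<le> \<kappa>\<^sup>2 * l2_sqnorm m (fs n - fs j)" by (simp add: l2_sqnorm_nonneg)
    then have "(l2_norm m (H (fs n) - H (fs j)))\<^sup>2 \<le> (l2_norm m (?s n - ?s j))\<^sup>2"
      using split[of n j] by (simp add: l2_norm_power2)
    then have "l2_norm m (H (fs n) - H (fs j)) \<le> l2_norm m (?s n - ?s j)"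
      by (rule power2_le_imp_le) (simp add: l2_norm_nonneg)
    then show "l2_norm m (H (fs n) - H (fs j)) \<le> 1 * l2_norm m (?s n - ?s j)" by simp
  qed simp
qed

lemma shifted_closure_surjective:
  fixes \<kappa> :: real
  assumes "\<kappa> \<noteq> 0"
    and no_eigen: "\<And>r. in_l2 m r \<Longrightarrow> H r = (\<lambda>x. - \<i> * \<kappa> * r x) \<Longrightarrow> r = (\<lambda>_. 0)"
    and h: "in_l2 m h"
  obtains f g where "(f, g) \<in> l2_closure m A" "h = g - (\<lambda>x. \<i> * \<kappa> * f x)"
proof -
  define K where "K f = H f - (\<lambda>x. \<i> * \<kappa> * f x)" for f
  have K_lincomb: "K (\<lambda>x. a * f x + b * g x) = (\<lambda>x. a * K f x + b * K g x)" for a b f g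
    by (auto simp: K_def Hop_lincomb algebra_simps)
  have K_l2: "f \<in> Cc \<Longrightarrow> in_l2 m (K f)" for f
    unfolding K_def by (intro in_l2_diff in_l2_cmult Hop_Cc_in_l2 Cc_in_l2)
  have "(\<lambda>_. 0) \<in> (Cc :: ('v \<Rightarrow> complex) set)" by (simp add: Cc_def)
  then have S_ne: "K ` Cc \<noteq> {}" by blast
  have S_l2: "\<And>t. t \<in> K ` Cc \<Longrightarrow> in_l2 m t" using K_l2 by blast
  have S_lincomb: "\<And>s t a b. s \<in> K ` Cc \<Longrightarrow> t \<in> K ` Cc \<Longrightarrow> (\<lambda>x. a * s x + b * t x) \<in> K ` Cc"
    by (auto simp flip: K_lincomb intro!: imageI Cc_lincomb)
  obtain s k where s: "\<And>n. s n \<in> K ` Cc" and k: "in_l2 m k" "l2_tendsto m s k"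
    and orth: "\<And>t. t \<in> K ` Cc \<Longrightarrow> l2_inner m (h - k) t = 0"
    using l2_projection[OF m_pos S_l2 S_ne S_lincomb h] by blast
  \<comment> \<open>h - k is orthogonal to the range of H - i\<kappa>, so it is an eigenfunction for -i\<kappa>, hence 0.\<close>
  have "h - k = (\<lambda>_. 0)"
    using no_eigen[OF in_l2_diff[OF h k(1)] Hop_eq_if_orthogonal_to_shifted_range] in_l2_diff[OF h k(1)]
      orth by (auto simp: K_def)
  then have "h = k" by (simp add: fun_eq_iff)
  have "\<exists>f. f \<in> Cc \<and> s n = K f" for n using s[of n] by (auto simp: image_iff)
  then obtain fs where fs: "\<And>n. fs n \<in> Cc" "\<And>n. s n = K (fs n)" by metis
  have "s = (\<lambda>n. K (fs n))" using fs(2) by blast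
  then have "l2_Cauchy m (\<lambda>n. H (fs n) - (\<lambda>x. \<i> * \<kappa> * fs n x))"
    using l2_Cauchy_if_tendsto[OF S_l2[OF s] k] by (simp add: K_def)
  then have "l2_Cauchy m fs \<and> l2_Cauchy m (\<lambda>n. H (fs n))"
    by (rule l2_Cauchy_if_shifted_Cauchy[rotated 2]) (use \<open>\<kappa> \<noteq> 0\<close> fs(1) in auto)
  then obtain f g where fg: "(f, g) \<in> l2_closure m A"
    and f: "l2_tendsto m fs f" and g: "l2_tendsto m (\<lambda>n. H (fs n)) g"
    using closure_graph_if_Cauchy[of fs] fs(1) by blast
  have "in_l2 m f" "in_l2 m g" using fg unfolding l2_closure_def by auto
  then have "l2_tendsto m s (g - (\<lambda>x. \<i> * \<kappa> * f x))"
    using l2_tendsto_diff_cmult[OF Hop_Cc_in_l2[OF fs(1)] Cc_in_l2[OF fs(1)] _ _ g f, of "\<i> * \<kappa>"]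
    by (simp add: fs(2) K_def)
  then have "h = g - (\<lambda>x. \<i> * \<kappa> * f x)"
    using l2_tendsto_unique[OF m_pos K_l2[OF fs(1)]] k \<open>h = k\<close> \<open>in_l2 m f\<close> \<open>in_l2 m g\<close>
    by (simp add: fs(2) in_l2_diff in_l2_cmult)
  with fg that show ?thesis by blast
qed

lemma adjoint_subset_closure:
  fixes \<kappa> :: real
  assumes "\<kappa> \<noteq> 0"
    and no_eigen: "\<And>r s. in_l2 m r \<Longrightarrow> s \<in> {-1, 1} \<Longrightarrow> H r = (\<lambda>x. s * \<i> * \<kappa> * r x) \<Longrightarrow> r = (\<lambda>_. 0)"
  shows "l2_adjoint m (l2_closure m A) \<subseteq> l2_closure m A"
proof clarify
  fix u w assume uw: "(u, w) \<in> l2_adjoint m (l2_closure m A)"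
  have u: "in_l2 m u" and w: "in_l2 m w"
    and adj: "\<And>f g. (f, g) \<in> l2_closure m A \<Longrightarrow> l2_inner m u g = l2_inner m w f"
    using uw unfolding l2_adjoint_def by auto
  \<comment> \<open>Solve the shifted equation in the closure with the same right-hand side as (u, w).\<close>
  obtain f g where fg: "(f, g) \<in> l2_closure m A"
    and eq: "w - (\<lambda>x. \<i> * \<kappa> * u x) = g - (\<lambda>x. \<i> * \<kappa> * f x)"
    using shifted_closure_surjective[OF \<open>\<kappa> \<noteq> 0\<close>, of "w - (\<lambda>x. \<i> * \<kappa> * u x)"]
      no_eigen[of _ "-1"] in_l2_diff[OF w in_l2_cmult[OF u]] by auto
  have f: "in_l2 m f" and g: "in_l2 m g" using fg unfolding l2_closure_def by auto
  have "H (u - f) = w - g"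
  proof (rule Hop_eq_if_l2_inner_eq)
    fix f' :: "'v \<Rightarrow> complex" assume "f' \<in> Cc"
    then show "l2_inner m (u - f) (H f') = l2_inner m (w - g) f'"
      using adj[OF graph_subset_closure[THEN subsetD, OF graph_memI]] closure_l2_inner_Hop[OF fg]
      by (simp add: l2_inner_diff_left u f w g Hop_Cc_in_l2 Cc_in_l2)
  qed
  also have "w - g = (\<lambda>x. 1 * \<i> * \<kappa> * (u - f) x)"
    using eq by (auto simp: fun_eq_iff algebra_simps)
  finally have "u - f = (\<lambda>_. 0)" using no_eigen[OF in_l2_diff[OF u f], of 1] by simp
  then have "u = f" and "w = g" using \<open>w - g = _\<close> by (auto simp: fun_eq_iff)
  with fg show "(u, w) \<in> l2_closure m A" by simp
qed

theorem essentially_self_adjoint_if_no_imaginary_eigenfunctions: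
  fixes \<kappa> :: real
  assumes "\<kappa> \<noteq> 0"
    and "\<And>r s. in_l2 m r \<Longrightarrow> s \<in> {-1, 1} \<Longrightarrow> H r = (\<lambda>x. s * \<i> * \<kappa> * r x) \<Longrightarrow> r = (\<lambda>_. 0)"
  shows "essentially_self_adjoint_l2 m A"
proof -
  have "l2_adjoint m (l2_closure m A) \<subseteq> l2_closure m A"
    using assms by (rule adjoint_subset_closure)
  then show ?thesis
    unfolding essentially_self_adjoint_l2_def self_adjoint_l2_def
    using densely_defined_graph densely_defined_closure closure_subset_adjoint by blast
qed

end

section \<open>Eigenfunctions grow along walks\<close>

lemma summable_if_even_odd_summable:
  fixes f :: "nat \<Rightarrow> real"
  assumes "\<And>n. f n \<ge> 0" "summable (\<lambda>k. f (2 * k))" "summable (\<lambda>k. f (2 * k + 1))"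
  shows "summable f"
proof (rule summableI_nonneg_bounded)
  fix n
  have "(\<Sum>i<n. f i) \<le> (\<Sum>i<2 * n. f i)"
    by (rule sum_mono2) (auto simp: assms(1))
  also have "\<dots> = (\<Sum>k<n. f (2 * k) + f (2 * k + 1))"
    by (induction n) (simp_all add: algebra_simps)
  also have "\<dots> \<le> (\<Sum>k. f (2 * k) + f (2 * k + 1))"
    by (rule sum_le_suminf) (use summable_add[OF assms(2,3)] assms(1) in \<open>auto intro: add_nonneg_nonneg\<close>)
  finally show "(\<Sum>i<n. f i) \<le> (\<Sum>k. f (2 * k) + f (2 * k + 1))" .
qed (use assms(1) in auto)

lemma summable_along_walk_if_increasing:
  fixes G g :: "'a \<Rightarrow> real" and w :: "nat \<Rightarrow> 'a"
  assumes "G summable_on UNIV" "\<And>x. G x \<ge> 0" and increasing: "\<And>n. g (w n) < g (w (Suc (Suc n)))"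
  shows "summable (\<lambda>n. G (w n))"
proof -
  have parity: "summable (\<lambda>k. G (w (2 * k + j)))" for j
  proof -
    have "strict_mono (\<lambda>k. g (w (2 * k + j)))"
      by (rule strict_monoI_Suc) (use increasing in simp)
    then have "inj (g \<circ> (\<lambda>k. w (2 * k + j)))"
      by (simp add: strict_mono_imp_inj_on o_def)
    then have inj: "inj (\<lambda>k. w (2 * k + j))"
      by (rule inj_on_imageI2)
    have "G summable_on range (\<lambda>k. w (2 * k + j))"
      by (rule summable_on_subset_banach[OF assms(1)]) simp
    then have "(G \<circ> (\<lambda>k. w (2 * k + j))) summable_on UNIV"
      by (simp only: summable_on_reindex[OF inj])
    then show ?thesis
      using summable_on_UNIV_nonneg_real_iff[of "\<lambda>k. G (w (2 * k + j))"] assms(2) by (simp add: o_def)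
  qed
  have "summable (\<lambda>k. G (w (2 * k)))" using parity[of 0] by simp
  from summable_if_even_odd_summable[OF assms(2) this parity[of 1]] show ?thesis .
qed

lemma prod_ge_min_if_consecutive_ge_1:
  fixes p :: "nat \<Rightarrow> real"
  assumes pos: "\<And>n. p n > 0" and pairs: "\<And>n. p n * p (Suc n) \<ge> 1"
  shows "(\<Prod>i<n. p i) \<ge> min 1 (p 0)"
proof -
  have "(\<Prod>i<n. p i) \<ge> min 1 (p 0) \<and> (\<Prod>i<Suc n. p i) \<ge> min 1 (p 0)"
  proof (induction n)
    case (Suc n)
    have "0 \<le> (\<Prod>i<n. p i)" using pos by (simp add: prod_nonneg less_imp_le)
    then have "(\<Prod>i<n. p i) * 1 \<le> (\<Prod>i<n. p i) * (p n * p (Suc n))"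
      by (rule mult_left_mono[OF pairs])
    also have "\<dots> = (\<Prod>i<Suc (Suc n). p i)" by (simp add: mult.assoc)
    finally show ?case using Suc.IH by simp
  qed simp
  then show ?thesis ..
qed

lemma doubling_recurrence_bounds:
  fixes p t :: "nat \<Rightarrow> real"
  assumes p_pos: "\<And>n. p n > 0" and pairs: "\<And>n. p n * p (Suc n) \<ge> 1"
    and t0: "t 0 > 0" and step: "\<And>n. t (Suc n) \<ge> 2 * p n * t n"
  shows "t n < t (Suc (Suc n))" "min 1 (p 0) * (t 0)\<^sup>2 * (\<Prod>i<n. p i) \<le> (t n)\<^sup>2"
proof -
  define P where "P n = (\<Prod>i<n. p i)" for n
  have P_pos: "P n > 0" for n using p_pos by (simp add: P_def prod_pos)
  have growth: "t n \<ge> 2 ^ n * P n * t 0" for n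
  proof (induction n)
    case (Suc n)
    have "2 ^ Suc n * P (Suc n) * t 0 = 2 * p n * (2 ^ n * P n * t 0)" by (simp add: P_def)
    also have "\<dots> \<le> 2 * p n * t n" using Suc p_pos[of n] by (intro mult_left_mono) auto
    also have "\<dots> \<le> t (Suc n)" by (rule step)
    finally show ?case .
  qed (simp add: P_def)
  have "P n * t 0 \<le> 2 ^ n * P n * t 0" for n
    using P_pos[of n] t0 by (intro mult_right_mono) auto
  then have Pt: "P n * t 0 \<le> t n" for n using growth order_trans by blast
  have t_pos: "t n > 0" for n using Pt[of n] P_pos[of n] t0 by (smt (verit) mult_pos_pos)
  have "t n < 4 * (p n * p (Suc n)) * t n" using pairs[of n] t_pos[of n] by simp
  also have "\<dots> = 2 * p (Suc n) * (2 * p n * t n)" by (simp add: algebra_simps)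
  also have "\<dots> \<le> 2 * p (Suc n) * t (Suc n)" using step[of n] p_pos[of "Suc n"] by (intro mult_left_mono) auto
  also have "\<dots> \<le> t (Suc (Suc n))" by (rule step)
  finally show "t n < t (Suc (Suc n))" .
  have "min 1 (p 0) \<le> P n"
    using prod_ge_min_if_consecutive_ge_1[of p n, OF p_pos pairs] by (simp add: P_def)
  then have "min 1 (p 0) * P n \<le> P n * P n" using P_pos[of n] by (intro mult_right_mono) auto
  then have "(min 1 (p 0) * P n) * (t 0)\<^sup>2 \<le> (P n * P n) * (t 0)\<^sup>2"
    by (rule mult_right_mono) simp
  also have "\<dots> = (P n * t 0)\<^sup>2" by (simp add: power2_eq_square)
  also have "\<dots> \<le> (t n)\<^sup>2" using Pt[of n] P_pos[of n] t0 by (intro power_mono) auto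
  finally show "min 1 (p 0) * (t 0)\<^sup>2 * (\<Prod>i<n. p i) \<le> (t n)\<^sup>2" by (simp add: P_def ac_simps)
qed

context weighted_graph
begin

lemma degree_pos: "E x y > 0 \<Longrightarrow> d x > 0"
  using member_le_sum[of y "{y. E x y \<noteq> 0}" "E x"] finite_neighbours E_nonneg m_pos[of x]
  by (fastforce simp: weighted_degree_def)

lemma eigenfunction_large_neighbour:
  assumes Hu: "\<And>x. H u x = c * u x" and "\<kappa> > 0" "\<bar>Im c\<bar> \<ge> \<kappa>" and "u x \<noteq> 0"
  shows "\<exists>y. E x y > 0 \<and> cmod (u y) \<ge> (\<kappa> / d x) * cmod (u x)"
proof (rule ccontr)
  assume small: "\<not> ?thesis"
  let ?N = "{y. E x y \<noteq> 0}"
  let ?B = "\<Sum>y\<in>?N. complex_of_real (E x y) * phase x y * u y"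
  have "?B = complex_of_real ((m x)\<^sup>2) * ((complex_of_real (d x + V x) - c) * u x)"
    using Hu[of x] Hop_eq_sum[OF finite_neighbours, of x u] m_pos[of x] by (simp add: field_simps)
  then have "cmod ?B = (m x)\<^sup>2 * (cmod (complex_of_real (d x + V x) - c) * cmod (u x))"
    by (simp add: norm_mult norm_power)
  moreover have "\<kappa> \<le> cmod (complex_of_real (d x + V x) - c)"
    using abs_Im_le_cmod[of "complex_of_real (d x + V x) - c"] assms(3) by simp
  ultimately have lower: "cmod ?B \<ge> (m x)\<^sup>2 * (\<kappa> * cmod (u x))"
    by (simp add: mult_left_mono mult_right_mono)
  have "?N \<noteq> {}"
  proof
    assume "?N = {}"
    then have "cmod ?B = 0" by (simp only: sum.empty) simp
    moreover have "(m x)\<^sup>2 * (\<kappa> * cmod (u x)) > 0"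
      using m_pos[of x] \<open>\<kappa> > 0\<close> \<open>u x \<noteq> 0\<close> by simp
    ultimately show False using lower by linarith
  qed
  then obtain y0 where "E x y0 > 0" using E_nonneg[of x] by (force simp: less_le)
  have "cmod ?B \<le> (\<Sum>y\<in>?N. E x y * cmod (u y))"
    by (rule order_trans[OF norm_sum]) (simp add: norm_mult E_nonneg)
  also have "\<dots> < (\<Sum>y\<in>?N. E x y * ((\<kappa> / d x) * cmod (u x)))"
  proof (rule sum_strict_mono[OF finite_neighbours \<open>?N \<noteq> {}\<close>])
    fix y assume "y \<in> ?N"
    then have "E x y > 0" using E_nonneg[of x y] by (simp add: less_le)
    moreover have "cmod (u y) < (\<kappa> / d x) * cmod (u x)" using small \<open>E x y > 0\<close> by auto
    ultimately show "E x y * cmod (u y) < E x y * ((\<kappa> / d x) * cmod (u x))"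
      by (rule mult_strict_left_mono[rotated])
  qed
  also have "\<dots> = (m x)\<^sup>2 * (\<kappa> * cmod (u x))"
    using degree_pos[OF \<open>E x y0 > 0\<close>] by (simp only: sum_distrib_right[symmetric] degree_eq) simp
  finally show False using lower by simp
qed

lemma eigenfunction_growing_walk:
  assumes Hu: "\<And>x. H u x = c * u x" and "\<kappa> > 0" "\<bar>Im c\<bar> \<ge> \<kappa>" and "u x0 \<noteq> 0"
  obtains w where "w 0 = x0"
    "\<And>n. E (w n) (w (Suc n)) > 0 \<and> cmod (u (w (Suc n))) \<ge> (\<kappa> / d (w n)) * cmod (u (w n))"
proof -
  define next_vertex where
    "next_vertex x = (SOME y. E x y > 0 \<and> cmod (u y) \<ge> (\<kappa> / d x) * cmod (u x))" for x
  define w where "w n = (next_vertex ^^ n) x0" for n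
  have "u (w n) \<noteq> 0 \<and> E (w n) (w (Suc n)) > 0
      \<and> cmod (u (w (Suc n))) \<ge> (\<kappa> / d (w n)) * cmod (u (w n))" for n
  proof (induction n)
    case 0
    show ?case
      using someI_ex[OF eigenfunction_large_neighbour[OF assms]] assms(4) by (simp add: w_def next_vertex_def)
  next
    case (Suc n)
    then have "d (w n) > 0" using degree_pos by blast
    then have "u (w (Suc n)) \<noteq> 0"
      using Suc \<open>\<kappa> > 0\<close> by (smt (verit) divide_pos_pos mult_pos_pos norm_le_zero_iff zero_less_norm_iff)
    from someI_ex[OF eigenfunction_large_neighbour[OF Hu assms(2,3) this]] this show ?case
      by (simp add: w_def next_vertex_def)
  qed
  then show ?thesis using that[of w] by (simp add: w_def)
qed

end

locale weighted_graph_divergent_walks = weighted_graph E m \<theta> V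
  for E :: "'v \<Rightarrow> 'v \<Rightarrow> real" and m \<theta> V +
  fixes \<gamma> :: real
  assumes \<gamma>_pos: "\<gamma> > 0"
    and divergent: "\<And>w. (\<forall>n. E (w n) (w (Suc n)) > 0) \<Longrightarrow>
        \<not> summable (\<lambda>n. (m (w n))\<^sup>2 * (\<Prod>i<n. \<gamma> / weighted_degree E m (w i)))"
begin

lemma degree_mult_le_if_edge:
  assumes "E x y > 0" shows "d x * d y \<le> \<gamma>\<^sup>2"
proof (rule ccontr)
  assume big: "\<not> ?thesis"
  have "E y x > 0" using assms E_sym[of x y] by simp
  have dx: "d x > 0" and dy: "d y > 0" using degree_pos assms \<open>E y x > 0\<close> by blast+
  \<comment> \<open>On the walk x, y, x, y, ... the products decay geometrically with ratio r < 1.\<close>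
  define w where "w n = (if even n then x else y)" for n :: nat
  define r where "r = \<gamma>\<^sup>2 / (d x * d y)"
  have r: "0 < r" "r < 1" using big \<gamma>_pos dx dy by (auto simp: r_def)
  have even_prod: "(\<Prod>i<2 * k. \<gamma> / d (w i)) = r ^ k" for k
    by (induction k) (auto simp: w_def r_def power2_eq_square)
  let ?a = "\<lambda>n. (m (w n))\<^sup>2 * (\<Prod>i<n. \<gamma> / d (w i))"
  have "?a (2 * k) = (m x)\<^sup>2 * r ^ k" for k
    by (simp only: even_prod) (simp add: w_def)
  moreover have "?a (2 * k + 1) = (m y)\<^sup>2 * (\<gamma> / d x) * r ^ k" for k
  proof -
    have "(\<Prod>i<2 * k + 1. \<gamma> / d (w i)) = r ^ k * (\<gamma> / d (w (2 * k)))"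
      by (simp only: Suc_eq_plus1[symmetric] prod.lessThan_Suc even_prod)
    then show ?thesis by (auto simp: w_def)
  qed
  ultimately have even: "summable (\<lambda>k. ?a (2 * k))" and odd: "summable (\<lambda>k. ?a (2 * k + 1))"
    using r by (simp_all add: summable_geometric)
  have nonneg: "?a n \<ge> 0" for n
  proof -
    have "\<gamma> / d (w i) \<ge> 0" for i using \<gamma>_pos dx dy by (simp add: w_def)
    then have "(\<Prod>i<n. \<gamma> / d (w i)) \<ge> 0" by (intro prod_nonneg ballI)
    then show ?thesis by simp
  qed
  have "summable ?a" by (rule summable_if_even_odd_summable[OF nonneg even odd])
  moreover have "\<forall>n. E (w n) (w (Suc n)) > 0" using assms \<open>E y x > 0\<close> by (simp add: w_def)
  ultimately show False using divergent by blast
qed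

lemma no_l2_eigenfunction:
  assumes u: "in_l2 m u" and Hu: "\<And>x. H u x = c * u x" and c: "\<bar>Im c\<bar> \<ge> 2 * \<gamma>"
  shows "u x0 = 0"
proof (rule ccontr)
  assume "u x0 \<noteq> 0"
  obtain w where "w 0 = x0" and walk:
    "\<And>n. E (w n) (w (Suc n)) > 0 \<and> cmod (u (w (Suc n))) \<ge> (2 * \<gamma> / d (w n)) * cmod (u (w n))"
    using eigenfunction_growing_walk[OF Hu _ c \<open>u x0 \<noteq> 0\<close>] \<gamma>_pos by auto
  define p where "p n = \<gamma> / d (w n)" for n
  define t where "t n = cmod (u (w n))" for n
  have p_pos: "p n > 0" for n using walk[of n] degree_pos \<gamma>_pos by (auto simp: p_def)
  have pairs: "p n * p (Suc n) \<ge> 1" for n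
    using degree_mult_le_if_edge[of "w n" "w (Suc n)"] walk[of n] degree_pos[of "w n"]
      degree_pos[of "w (Suc n)"] walk[of "Suc n"]
    by (auto simp: p_def field_simps power2_eq_square)
  have step: "t (Suc n) \<ge> 2 * p n * t n" for n using walk[of n] by (simp add: t_def p_def)
  have t0: "t 0 > 0" using \<open>w 0 = x0\<close> \<open>u x0 \<noteq> 0\<close> by (simp add: t_def)
  note bounds = doubling_recurrence_bounds[of p t, OF p_pos pairs t0 step]
  \<comment> \<open>The l2 mass of u along the walk is finite, and it dominates the divergent walk sum.\<close>
  have "summable (\<lambda>n. (m (w n))\<^sup>2 * (t n)\<^sup>2)"
    using summable_along_walk_if_increasing[of "\<lambda>x. (m x)\<^sup>2 * (cmod (u x))\<^sup>2" "\<lambda>x. cmod (u x)" w]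
      u bounds(1) by (simp add: t_def in_l2_def)
  then have sq_summable: "summable (\<lambda>n. (m (w n))\<^sup>2 * (t n)\<^sup>2 / (min 1 (p 0) * (t 0)\<^sup>2))"
    by (rule summable_divide)
  have "summable (\<lambda>n. (m (w n))\<^sup>2 * (\<Prod>i<n. p i))"
  proof (rule summable_comparison_test'[OF sq_summable, where N = 0])
    fix n
    have "min 1 (p 0) * (t 0)\<^sup>2 > 0" using p_pos t0 by simp
    then have "(\<Prod>i<n. p i) \<le> (t n)\<^sup>2 / (min 1 (p 0) * (t 0)\<^sup>2)"
      using bounds(2)[of n] by (simp add: pos_le_divide_eq mult.commute)
    then have "(m (w n))\<^sup>2 * (\<Prod>i<n. p i) \<le> (m (w n))\<^sup>2 * ((t n)\<^sup>2 / (min 1 (p 0) * (t 0)\<^sup>2))"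
      by (rule mult_left_mono) simp
    moreover have "(\<Prod>i<n. p i) \<ge> 0" using p_pos by (simp add: prod_nonneg less_imp_le)
    ultimately show "norm ((m (w n))\<^sup>2 * (\<Prod>i<n. p i)) \<le> (m (w n))\<^sup>2 * (t n)\<^sup>2 / (min 1 (p 0) * (t 0)\<^sup>2)"
      by simp
  qed
  moreover have "\<forall>n. E (w n) (w (Suc n)) > 0" using walk by blast
  ultimately show False using divergent unfolding p_def by blast
qed

theorem essentially_self_adjoint: "essentially_self_adjoint_l2 m A"
proof (rule essentially_self_adjoint_if_no_imaginary_eigenfunctions)
  show "2 * \<gamma> \<noteq> 0" using \<gamma>_pos by simp
  fix r and s :: complex assume r: "in_l2 m r" and s: "s \<in> {-1, 1}"
    and eigen: "H r = (\<lambda>x. s * \<i> * (2 * \<gamma>) * r x)"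
  have "\<bar>Im (s * \<i> * (2 * \<gamma>))\<bar> \<ge> 2 * \<gamma>" using s \<gamma>_pos by auto
  moreover have "H r x = s * \<i> * (2 * \<gamma>) * r x" for x using eigen by simp
  ultimately show "r = (\<lambda>_. 0)"
    using no_l2_eigenfunction[OF r] by blast
qed

end

theorem corollary2p4:
  fixes E :: "'v::countable \<Rightarrow> 'v \<Rightarrow> real"
    and m :: "'v \<Rightarrow> real"
    and \<theta> :: "'v \<Rightarrow> 'v \<Rightarrow> real"
    and V :: "'v \<Rightarrow> real"
    and \<gamma> :: real
  assumes E_nonneg: "\<And>x y. E x y \<ge> 0"
    and E_sym: "\<And>x y. E x y = E y x"
    and m_pos: "\<And>x. m x > 0"
    and \<theta>_antisym: "\<And>x y. \<theta> x y = - \<theta> y x"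
    and \<theta>_range: "\<And>x y. \<theta> x y \<in> {-pi..pi}"
    and locally_finite: "\<And>x. finite {y. E x y > 0}"
    and connected: "\<And>x y. (x, y) \<in> {(a, b). E a b > 0}\<^sup>*"
    and no_loops: "\<And>x. E x x = 0"
    and \<gamma>_pos: "\<gamma> > 0"
    and hyp: "\<And>xs :: nat \<Rightarrow> 'v. (\<forall>n. E (xs n) (xs (Suc n)) > 0) \<Longrightarrow>
        \<not> summable (\<lambda>n. (m (xs n))\<^sup>2 * (\<Prod>i<n. \<gamma> / weighted_degree E m (xs i)))"
  shows "essentially_self_adjoint_l2 m (graph_H_Cc E m \<theta> V)"
proof -
  interpret weighted_graph_divergent_walks E m \<theta> V \<gamma>
    by unfold_locales (use E_nonneg E_sym m_pos \<theta>_antisym locally_finite \<gamma>_pos hyp in blast)+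
  show ?thesis by (rule essentially_self_adjoint)
qed

end
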